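(* Let $a\in\mathbb{D}$, $b_a(z)=\frac{z-a}{1-\bar a z}$, $N\in\mathbb{N}$, and let $A$ be a linear operator on $K^2_{b_a^N}$. Then $A\in\mathcal{T}(b_a^N)$ if and only if for every $1\leqslant n\leqslant N$ the operator $A_n=P_nA|_{K^2_{b_a^n}}$ satisfies $C_{b_a^n}A_nC_{b_a^n}=A_n^*$, where $P_n\colon K^2_{b_a^N}\to K^2_{b_a^n}$ is the orthogonal projection.
   Context: For an inner function $\theta$, $K^2_\theta=H^2\ominus\theta H^2$, $P_\theta$ the orthogonal projection of $L^2(\mathbb{T})$ onto $K^2_\theta$, $C_\theta f(z)=\theta(z)\overline{zf(z)}$ on $|z|=1$ (a conjugation on $K^2_\theta$). For $\varphi\in L^2$, $A^\theta_\varphi f=P_\theta(\varphi f)$ for $f\in K^2_\theta$ with $\varphi f\in L^2$; $\mathcal{T}(\theta)$ is the set of all bounded truncated Toeplitz operators $A^\theta_\varphi$ on $K^2_\theta$. *)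

theory Defs
  imports "HOL-Analysis.Analysis"
begin

text \<open>
  Model: L^2(T) is represented, via the (unitary) Fourier transform, by the space
  of square-summable sequences indexed by the integers; the element f of L^2(T)
  corresponds to its Fourier coefficient sequence (n |-> hat f(n)), where the
  coefficient at n belongs to the character e^{int}.  Pointwise multiplication of
  functions corresponds to convolution of coefficient sequences, complex conjugation
  to n |-> cnj (f (-n)), multiplication by z to the shift n |-> f (n - 1).
\<close>

type_synonym seq = "int \<Rightarrow> complex"

definition L2 :: "seq set" where
  "L2 = {f. (\<lambda>n. (cmod (f n))\<^sup>2) summable_on UNIV}"

definition ip :: "seq \<Rightarrow> seq \<Rightarrow> complex" where
  "ip f g = (\<Sum>\<^sub>\<infinity>n. f n * cnj (g n))"

definition l2norm :: "seq \<Rightarrow> real" where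
  "l2norm f = sqrt (\<Sum>\<^sub>\<infinity>n. (cmod (f n))\<^sup>2)"

definition mult :: "seq \<Rightarrow> seq \<Rightarrow> seq" where
  "mult \<phi> f = (\<lambda>n. \<Sum>\<^sub>\<infinity>k. \<phi> k * f (n - k))"

definition fourier_coeff :: "(complex \<Rightarrow> complex) \<Rightarrow> seq" where
  "fourier_coeff F = (\<lambda>n. integral {0..2*pi} (\<lambda>t. F (cis t) * cis (- (of_int n * t))) / (2 * pi))"

definition H2 :: "seq set" where
  "H2 = {f \<in> L2. \<forall>n<0. f n = 0}"

definition K2 :: "seq \<Rightarrow> seq set" where
  "K2 \<theta> = {f \<in> H2. \<forall>h \<in> H2. ip f (mult \<theta> h) = 0}"

definition proj :: "seq set \<Rightarrow> seq \<Rightarrow> seq" where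
  "proj S f = (SOME g. g \<in> S \<and> (\<forall>h \<in> S. ip (\<lambda>n. f n - g n) h = 0))"

text \<open>Conjugation C_theta f = theta * conj (z f) on the circle.\<close>
definition conjC :: "seq \<Rightarrow> seq \<Rightarrow> seq" where
  "conjC \<theta> f = mult \<theta> (\<lambda>n. cnj (f (- n - 1)))"

definition adjoint_on :: "seq set \<Rightarrow> (seq \<Rightarrow> seq) \<Rightarrow> seq \<Rightarrow> seq" where
  "adjoint_on S T g = (SOME h. h \<in> S \<and> (\<forall>f \<in> S. ip (T f) g = ip f h))"

definition linear_operator_on :: "seq set \<Rightarrow> (seq \<Rightarrow> seq) \<Rightarrow> bool" where
  "linear_operator_on S A \<longleftrightarrow> (\<forall>f \<in> S. A f \<in> S) \<and>
     (\<forall>f \<in> S. \<forall>g \<in> S. \<forall>c. A (\<lambda>n. c * f n + g n) = (\<lambda>n. c * A f n + A g n))"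

text \<open>A is a bounded truncated Toeplitz operator on K^2_theta: A is the bounded operator
  on K^2_theta agreeing with A^theta_phi f = P_theta (phi f) on its (dense) domain
  {f in K^2_theta. phi f in L^2}, for some symbol phi in L^2.\<close>
definition TTO :: "seq \<Rightarrow> (seq \<Rightarrow> seq) \<Rightarrow> bool" where
  "TTO \<theta> A \<longleftrightarrow>
     (\<exists>\<phi> \<in> L2.
        (\<forall>f \<in> K2 \<theta>. mult \<phi> f \<in> L2 \<longrightarrow> A f = proj (K2 \<theta>) (mult \<phi> f)) \<and>
        (\<forall>f \<in> K2 \<theta>. \<forall>\<epsilon>>0. \<exists>g \<in> K2 \<theta>. mult \<phi> g \<in> L2 \<and> l2norm (\<lambda>n. f n - g n) < \<epsilon>) \<and>
        (\<exists>M. \<forall>f \<in> K2 \<theta>. l2norm (A f) \<le> M * l2norm f))"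

definition blaschke :: "complex \<Rightarrow> complex \<Rightarrow> complex" where
  "blaschke a z = (z - a) / (1 - cnj a * z)"

definition bpow :: "complex \<Rightarrow> nat \<Rightarrow> seq" where
  "bpow a n = fourier_coeff (\<lambda>z. blaschke a z ^ n)"

end

theory Submission
  imports Defs
begin

text \<open>
  The inner function \<open>b\<^sub>a\<^sup>n\<close> has absolutely summable
  coefficients, and the Takenaka--Malmquist functions \<open>e\<^sub>k = b\<^sub>a\<^sup>k k\<^sub>a / \<parallel>k\<^sub>a\<parallel>\<close>, \<open>k < n\<close>, form an
  orthonormal basis of \<open>K\<^sup>2\<^sub>b\<^sub>a\<^sup>n\<close>; the bases are nested in \<open>n\<close>. Let \<open>(m\<^sub>j\<^sub>k)\<close> be the matrix of \<open>A\<close>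
  in this basis. Then \<open>A\<^sub>n\<close> has the upper left \<open>n \<times> n\<close> block of it, and since \<open>C\<^sub>b\<^sub>a\<^sup>n\<close> maps
  \<open>e\<^sub>k\<close> to \<open>e\<^sub>n\<^sub>-\<^sub>1\<^sub>-\<^sub>k\<close>, the identity \<open>C A\<^sub>n C = A\<^sub>n\<^sup>*\<close> says \<open>m\<^sub>n\<^sub>-\<^sub>1\<^sub>-\<^sub>i\<^sub>,\<^sub>n\<^sub>-\<^sub>1\<^sub>-\<^sub>k = m\<^sub>k\<^sub>i\<close>.
  These conditions for all \<open>n \<le> N\<close> together say exactly that \<open>(m\<^sub>j\<^sub>k)\<close> is a Toeplitz matrix.
  Finally \<open>A\<close> is a truncated Toeplitz operator iff its matrix is Toeplitz: multiplication by
  \<open>b\<^sub>a\<close> is isometric and shifts the basis, so \<open>\<langle>\<phi> e\<^sub>k\<^sub>+\<^sub>1, e\<^sub>j\<^sub>+\<^sub>1\<rangle> = \<langle>\<phi> e\<^sub>k, e\<^sub>j\<rangle>\<close>;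
  conversely the matrix \<open>(t\<^sub>j\<^sub>-\<^sub>k)\<close> is realised by the bounded symbol
  \<open>\<Sum>\<^sub>d\<^sub>\<ge>\<^sub>0 t\<^sub>d b\<^sub>a\<^sup>d + \<Sum>\<^sub>d\<^sub>>\<^sub>0 t\<^sub>-\<^sub>d conj (b\<^sub>a\<^sup>d)\<close>.
\<close>

section \<open>Summable and square-summable sequences\<close>

definition l1 :: "seq \<Rightarrow> bool" where "l1 f \<longleftrightarrow> (\<lambda>n. cmod (f n)) summable_on UNIV"
definition l1norm :: "seq \<Rightarrow> real" where "l1norm f = (\<Sum>\<^sub>\<infinity>n. cmod (f n))"
definition l2norm_sq :: "seq \<Rightarrow> real" where "l2norm_sq f = (\<Sum>\<^sub>\<infinity>n. (cmod (f n))\<^sup>2)"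

lemma L2_iff: "f \<in> L2 \<longleftrightarrow> (\<lambda>n. (cmod (f n))\<^sup>2) summable_on UNIV"
  by (simp add: L2_def)

lemma L2_bound: assumes "f \<in> L2" shows "cmod (f n) \<le> sqrt (l2norm_sq f)"
proof -
  have "sum (\<lambda>m. (cmod (f m))\<^sup>2) {n} \<le> l2norm_sq f"
    unfolding l2norm_sq_def using assms unfolding L2_def
    by (intro finite_sum_le_infsum) auto
  thus ?thesis by (simp add: real_le_rsqrt)
qed

lemma l1_bound: assumes "l1 f" shows "cmod (f n) \<le> l1norm f"
proof -
  have "sum (\<lambda>m. cmod (f m)) {n} \<le> l1norm f"
    unfolding l1norm_def using assms unfolding l1_def
    by (intro finite_sum_le_infsum) auto
  thus ?thesis by simp
qed

lemma l1_L2: assumes "l1 f" shows "f \<in> L2"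
proof -
  have "(\<lambda>n. l1norm f * cmod (f n)) summable_on UNIV"
    using assms unfolding l1_def by (intro summable_on_cmult_right) auto
  moreover have "(cmod (f n))\<^sup>2 \<le> l1norm f * cmod (f n)" for n
    using l1_bound[OF assms, of n] by (simp add: power2_eq_square mult_right_mono)
  ultimately show ?thesis unfolding L2_def
    by (auto intro: summable_on_comparison_test)
qed

lemma L2_shift: assumes "f \<in> L2"
  shows "(\<lambda>n. f (n - c)) \<in> L2" "l2norm_sq (\<lambda>n. f (n - c)) = l2norm_sq f"
proof -
  have b: "bij_betw (\<lambda>n. n - c) UNIV UNIV"
    by (rule bij_betwI[where g="\<lambda>n. n + c"]) auto
  show "(\<lambda>n. f (n - c)) \<in> L2" using assms unfolding L2_def
    using summable_on_reindex_bij_betw[OF b, of "\<lambda>n. (cmod (f n))\<^sup>2"] by simp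
  show "l2norm_sq (\<lambda>n. f (n - c)) = l2norm_sq f" unfolding l2norm_sq_def
    using infsum_reindex_bij_betw[OF b, of "\<lambda>n. (cmod (f n))\<^sup>2"] by simp
qed

lemma norm_mult_le_sq_add: "cmod x * cmod y \<le> (cmod x)\<^sup>2 + (cmod y)\<^sup>2"
proof -
  have "2 * (cmod x * cmod y) \<le> (cmod x)\<^sup>2 + (cmod y)\<^sup>2"
    using sum_squares_bound[of "cmod x" "cmod y"] by simp
  moreover have "0 \<le> cmod x * cmod y" by simp
  ultimately show ?thesis by linarith
qed

lemma L2_prod_abs: assumes "x \<in> L2" "y \<in> L2"
  shows "(\<lambda>n. cmod (x n) * cmod (y n)) summable_on UNIV"
    and "(\<Sum>\<^sub>\<infinity>n. cmod (x n) * cmod (y n)) \<le> l2norm_sq x + l2norm_sq y"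
proof -
  have s: "(\<lambda>n. (cmod (x n))\<^sup>2 + (cmod (y n))\<^sup>2) summable_on UNIV"
    using assms unfolding L2_iff by (intro summable_on_add)
  show "(\<lambda>n. cmod (x n) * cmod (y n)) summable_on UNIV"
    by (rule summable_on_comparison_test[OF s]) (auto simp: norm_mult_le_sq_add)
  hence "(\<Sum>\<^sub>\<infinity>n. cmod (x n) * cmod (y n)) \<le> (\<Sum>\<^sub>\<infinity>n. (cmod (x n))\<^sup>2 + (cmod (y n))\<^sup>2)"
    by (intro infsum_mono s) (auto simp: norm_mult_le_sq_add)
  also have "\<dots> = l2norm_sq x + l2norm_sq y" unfolding l2norm_sq_def
    using assms unfolding L2_iff by (intro infsum_add)
  finally show "(\<Sum>\<^sub>\<infinity>n. cmod (x n) * cmod (y n)) \<le> l2norm_sq x + l2norm_sq y" .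
qed

lemma L2_ip_summable: assumes "x \<in> L2" "y \<in> L2"
  shows "(\<lambda>n. x n * cnj (y n)) summable_on UNIV"
  using L2_prod_abs(1)[OF assms]
  by (simp add: summable_on_iff_abs_summable_on_complex norm_mult)

lemma L2_lincomb: assumes "x \<in> L2" "y \<in> L2" shows "(\<lambda>n. c * x n + y n) \<in> L2"
proof -
  have "(cmod (c * x n + y n))\<^sup>2 \<le> 2 * (cmod c)\<^sup>2 * (cmod (x n))\<^sup>2 + 2 * (cmod (y n))\<^sup>2" for n
  proof -
    have "cmod (c * x n + y n) \<le> cmod c * cmod (x n) + cmod (y n)"
      by (metis norm_mult norm_triangle_ineq)
    hence "(cmod (c * x n + y n))\<^sup>2 \<le> (cmod c * cmod (x n) + cmod (y n))\<^sup>2"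
      by (simp add: power_mono)
    also have "\<dots> \<le> 2 * (cmod c * cmod (x n))\<^sup>2 + 2 * (cmod (y n))\<^sup>2"
      using sum_squares_bound[of "cmod c * cmod (x n)" "cmod (y n)"] by (simp add: power2_sum)
    finally show ?thesis by (simp add: power_mult_distrib)
  qed
  moreover have "(\<lambda>n. 2 * (cmod c)\<^sup>2 * (cmod (x n))\<^sup>2 + 2 * (cmod (y n))\<^sup>2) summable_on UNIV"
    using assms unfolding L2_iff by (intro summable_on_add summable_on_cmult_right)
  ultimately show ?thesis unfolding L2_def
    by (auto intro: summable_on_comparison_test)
qed

lemma L2_zero: "(\<lambda>n. 0) \<in> L2" unfolding L2_def by simp

lemma L2_diff: "x \<in> L2 \<Longrightarrow> y \<in> L2 \<Longrightarrow> (\<lambda>n. x n - y n) \<in> L2"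
  using L2_lincomb[of y x "-1"] by simp

lemma L2_sum: "finite K \<Longrightarrow> (\<And>k. k \<in> K \<Longrightarrow> x k \<in> L2) \<Longrightarrow> (\<lambda>m. \<Sum>k\<in>K. c k * x k m) \<in> L2"
proof (induction K rule: finite_induct)
  case empty thus ?case by (simp add: L2_zero)
next
  case (insert k K)
  thus ?case by (simp add: L2_lincomb)
qed

lemma ip_lincomb_left: assumes "x \<in> L2" "y \<in> L2" "z \<in> L2"
  shows "ip (\<lambda>n. c * x n + y n) z = c * ip x z + ip y z"
proof -
  have "ip (\<lambda>n. c * x n + y n) z = (\<Sum>\<^sub>\<infinity>n. c * (x n * cnj (z n)) + y n * cnj (z n))"
    unfolding ip_def by (simp add: algebra_simps)
  also have "\<dots> = (\<Sum>\<^sub>\<infinity>n. c * (x n * cnj (z n))) + (\<Sum>\<^sub>\<infinity>n. y n * cnj (z n))"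
    by (intro infsum_add summable_on_cmult_right L2_ip_summable assms)
  finally show ?thesis unfolding ip_def by (simp add: infsum_cmult_right')
qed

lemma ip_cnj: "ip y x = cnj (ip x y)"
  unfolding ip_def by (subst infsum_cnj[symmetric]) (simp add: mult.commute)

lemma ip_self: assumes "x \<in> L2" shows "ip x x = complex_of_real (l2norm_sq x)"
proof -
  have "ip x x = (\<Sum>\<^sub>\<infinity>n. complex_of_real ((cmod (x n))\<^sup>2))"
    unfolding ip_def by (intro infsum_cong) (rule complex_norm_square[symmetric])
  also have "\<dots> = complex_of_real (l2norm_sq x)" unfolding l2norm_sq_def
    using assms unfolding L2_iff
    by (intro infsumI has_sum_of_real has_sum_infsum)
  finally show ?thesis .
qed

lemma ip_self_eq_0D: assumes "x \<in> L2" "ip x x = 0" shows "x = (\<lambda>n. 0)"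
proof
  fix n
  have "l2norm_sq x = 0" using assms(2) ip_self[OF assms(1)] by simp
  hence "(cmod (x n))\<^sup>2 = 0"
    using assms(1) unfolding l2norm_sq_def L2_iff
    by (intro nonneg_infsum_le_0D[of "\<lambda>n. (cmod (x n))\<^sup>2" UNIV]) auto
  thus "x n = 0" by simp
qed

lemma ip_zero_left: "ip (\<lambda>n. 0) y = 0" unfolding ip_def by simp

lemma ip_sum_left: "finite K \<Longrightarrow> (\<And>k. k \<in> K \<Longrightarrow> x k \<in> L2) \<Longrightarrow> z \<in> L2 \<Longrightarrow>
    ip (\<lambda>m. \<Sum>k\<in>K. c k * x k m) z = (\<Sum>k\<in>K. c k * ip (x k) z)"
proof (induction K rule: finite_induct)
  case empty thus ?case by (simp add: ip_zero_left)
next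
  case (insert k K)
  have "ip (\<lambda>m. \<Sum>j\<in>insert k K. c j * x j m) z = ip (\<lambda>m. c k * x k m + (\<Sum>j\<in>K. c j * x j m)) z"
    using insert by simp
  also have "\<dots> = c k * ip (x k) z + ip (\<lambda>m. \<Sum>j\<in>K. c j * x j m) z"
    using insert by (intro ip_lincomb_left L2_sum) auto
  finally show ?case using insert by simp
qed

lemma ip_sum_right: "finite K \<Longrightarrow> (\<And>k. k \<in> K \<Longrightarrow> x k \<in> L2) \<Longrightarrow> z \<in> L2 \<Longrightarrow>
    ip z (\<lambda>m. \<Sum>k\<in>K. c k * x k m) = (\<Sum>k\<in>K. cnj (c k) * ip z (x k))"
  using ip_sum_left[of K x z c] by (subst ip_cnj) (simp add: ip_cnj[of z])

lemma ip_scale_right: "ip x (\<lambda>n. c * y n) = cnj c * ip x y"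
  unfolding ip_def by (simp add: infsum_cmult_right'[symmetric] mult.left_commute)

lemma ip_diff: "x \<in> L2 \<Longrightarrow> y \<in> L2 \<Longrightarrow> z \<in> L2 \<Longrightarrow> ip (\<lambda>m. x m - y m) z = ip x z - ip y z"
  using ip_lincomb_left[of y x z "-1"] by simp

section \<open>Convolution\<close>

text \<open>Coefficient sequences of \<open>1\<close>, of \<open>p + q z\<close>, of \<open>conj f\<close> and of \<open>conj (z f)\<close>; the
  causal sequences are those of functions with no negative Fourier coefficients.\<close>

definition one_seq :: seq where "one_seq = (\<lambda>n. if n = 0 then 1 else 0)"
definition affine_seq :: "complex \<Rightarrow> complex \<Rightarrow> seq" where
  "affine_seq p q = (\<lambda>k. if k = 0 then p else if k = 1 then q else 0)"
definition cnj_seq :: "seq \<Rightarrow> seq" where "cnj_seq f = (\<lambda>n. cnj (f (-n)))"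
definition conj_z :: "seq \<Rightarrow> seq" where "conj_z f = (\<lambda>m. cnj (f (- m - 1)))"
definition causal :: "seq \<Rightarrow> bool" where "causal f \<longleftrightarrow> (\<forall>n<0. f n = 0)"
definition bounded_seq :: "seq \<Rightarrow> bool" where "bounded_seq f \<longleftrightarrow> (\<exists>H. \<forall>n. cmod (f n) \<le> H)"

lemma H2_iff_causal: "f \<in> H2 \<longleftrightarrow> f \<in> L2 \<and> causal f" unfolding H2_def causal_def by auto

lemma L2_if_K2: "f \<in> K2 \<theta> \<Longrightarrow> f \<in> L2" unfolding K2_def H2_iff_causal by auto

lemma l1_bounded_seq: "l1 f \<Longrightarrow> bounded_seq f" unfolding bounded_seq_def using l1_bound by blast
lemma L2_bounded_seq: "f \<in> L2 \<Longrightarrow> bounded_seq f" unfolding bounded_seq_def using L2_bound by blast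

lemma bij_betw_conv_index: "bij_betw (\<lambda>(n::int, i::int). (i, n - i)) UNIV UNIV"
  by (rule bij_betwI[where g="\<lambda>(i, j). (i + j, i)"]) auto

lemma bij_betw_swap_int: "bij_betw (\<lambda>(n::int, i::int). (i, n)) UNIV UNIV"
  by (rule bij_betwI[where g="\<lambda>(i, j). (j, i)"]) auto

lemma bij_betw_minus_int: "bij_betw (\<lambda>k::int. c - k) UNIV UNIV"
  by (rule bij_betwI[where g="\<lambda>k. c - k"]) auto

lemma summable_on_Sigma_nonneg_iff:
  fixes F :: "int \<times> int \<Rightarrow> real"
  assumes "\<And>p. F p \<ge> 0"
  shows "F summable_on UNIV \<longleftrightarrow>
     (\<forall>x. (\<lambda>y. F (x,y)) summable_on UNIV) \<and> (\<lambda>x. \<Sum>\<^sub>\<infinity>y. F (x,y)) summable_on UNIV"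
proof -
  have "(\<lambda>p. norm (F p)) = F" using assms by (simp add: fun_eq_iff)
  hence "F summable_on UNIV \<longleftrightarrow> (\<lambda>p. norm (F p)) summable_on Sigma UNIV (\<lambda>_. UNIV)"
    by (simp only: UNIV_Times_UNIV)
  also have "\<dots> \<longleftrightarrow> (\<forall>x\<in>UNIV. (\<lambda>y. norm (F (x, y))) summable_on UNIV) \<and>
             ((\<lambda>x. norm (infsum (\<lambda>y. norm (F (x, y))) UNIV)) summable_on UNIV)"
    by (rule Infinite_Sum.abs_summable_on_Sigma_iff)
  also have "\<dots> \<longleftrightarrow> (\<forall>x. (\<lambda>y. F (x,y)) summable_on UNIV) \<and> (\<lambda>x. \<Sum>\<^sub>\<infinity>y. F (x,y)) summable_on UNIV"
  proof -
    have "norm (infsum (\<lambda>y. F (x, y)) UNIV) = infsum (\<lambda>y. F (x, y)) UNIV" for x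
      using infsum_nonneg[of UNIV "\<lambda>y. F (x,y)"] assms by simp
    moreover have "\<bar>F p\<bar> = F p" for p using assms[of p] by simp
    ultimately show ?thesis by simp
  qed
  finally show ?thesis .
qed

lemma summable_on_swap_int:
  fixes F :: "int \<times> int \<Rightarrow> 'b::real_normed_vector"
  shows "(\<lambda>(n,i). F (i,n)) summable_on UNIV \<longleftrightarrow> F summable_on UNIV"
proof -
  have "(\<lambda>(n,i). F (i,n)) = (\<lambda>x. F ((\<lambda>(n, i). (i, n)) x))" by (auto simp: fun_eq_iff)
  thus ?thesis using summable_on_reindex_bij_betw[OF bij_betw_swap_int, of F] by simp
qed

lemma summable_on_tensor_abs:
  assumes "l1 f" "l1 g"
  shows "(\<lambda>(i,j). cmod (f i) * cmod (g j)) summable_on UNIV"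
proof -
  have "(\<lambda>j. cmod (f i) * cmod (g j)) summable_on UNIV" for i
    using assms(2) unfolding l1_def by (intro summable_on_cmult_right)
  moreover have "(\<lambda>i. \<Sum>\<^sub>\<infinity>j. cmod (f i) * cmod (g j)) summable_on UNIV"
  proof -
    have "(\<lambda>i. cmod (f i) * l1norm g) summable_on UNIV"
      using assms(1) unfolding l1_def by (intro summable_on_cmult_left)
    moreover have "(\<Sum>\<^sub>\<infinity>j. cmod (f i) * cmod (g j)) = cmod (f i) * l1norm g" for i
      unfolding l1norm_def by (rule infsum_cmult_right')
    ultimately show ?thesis by simp
  qed
  ultimately show ?thesis
    using summable_on_Sigma_nonneg_iff[of "\<lambda>(i,j). cmod (f i) * cmod (g j)"] by auto
qed

lemma summable_on_conv_abs:
  assumes "l1 f" "l1 g"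
  shows "(\<lambda>(n,i). cmod (f i) * cmod (g (n - i))) summable_on UNIV"
proof -
  have "(\<lambda>(n,i). cmod (f i) * cmod (g (n - i))) =
        (\<lambda>x. (\<lambda>(i,j). cmod (f i) * cmod (g j)) ((\<lambda>(n, i). (i, n - i)) x))"
    by (auto simp: fun_eq_iff)
  thus ?thesis
    using summable_on_reindex_bij_betw[OF bij_betw_conv_index, of "\<lambda>(i,j). cmod (f i) * cmod (g j)"]
      summable_on_tensor_abs[OF assms] by simp
qed

lemma l1_mult:
  assumes "l1 f" "l1 g" shows "l1 (mult f g)"
proof -
  have "(\<lambda>i. cmod (f i) * cmod (g (n - i))) summable_on UNIV"
    and sum_inner: "(\<lambda>n. \<Sum>\<^sub>\<infinity>i. cmod (f i) * cmod (g (n - i))) summable_on UNIV" for n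
    using summable_on_conv_abs[OF assms]
      summable_on_Sigma_nonneg_iff[of "\<lambda>(n,i). cmod (f i) * cmod (g (n - i))"] by auto
  hence "cmod (mult f g n) \<le> (\<Sum>\<^sub>\<infinity>i. cmod (f i) * cmod (g (n - i)))" for n
    unfolding mult_def using norm_infsum_bound[of "\<lambda>i. f i * g (n - i)" UNIV]
    by (simp add: norm_mult)
  thus ?thesis unfolding l1_def
    by (intro summable_on_comparison_test[OF sum_inner]) (auto intro: infsum_nonneg)
qed

lemma mult_comm: "mult f g = mult g f"
proof
  fix n
  show "mult f g n = mult g f n"
    unfolding mult_def
    by (rule infsum_reindex_bij_witness[where i="\<lambda>k. n - k" and j="\<lambda>k. n - k"]) auto
qed

lemma mult_assoc:
  assumes "l1 f" "l1 g" "bounded_seq h"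
  shows "mult (mult f g) h = mult f (mult g h)"
proof
  fix n
  obtain H where H: "\<And>n. cmod (h n) \<le> H" using assms(3) unfolding bounded_seq_def by blast
  have H0: "H \<ge> 0" using H[of 0] norm_ge_zero order_trans by blast
  let ?F = "\<lambda>k i. f i * g (k - i) * h (n - k)"
  have "(\<lambda>p. norm ((\<lambda>(k,i). ?F k i) p)) summable_on UNIV"
  proof (rule summable_on_comparison_test)
    show "(\<lambda>(k,i). H * (cmod (f i) * cmod (g (k - i)))) summable_on UNIV"
      using summable_on_cmult_right[OF summable_on_conv_abs[OF assms(1,2)], of H]
      by (simp add: case_prod_unfold)
    show "norm ((\<lambda>(k,i). ?F k i) p) \<le> (\<lambda>(k,i). H * (cmod (f i) * cmod (g (k - i)))) p"
      for p
    proof (cases p)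
      case (Pair k i)
      have "cmod (f i) * cmod (g (k - i)) * cmod (h (n - k)) \<le> cmod (f i) * cmod (g (k - i)) * H"
        by (intro mult_left_mono H) auto
      thus ?thesis using Pair by (simp add: norm_mult mult_ac)
    qed
  qed simp
  hence sum2: "(\<lambda>(k,i). ?F k i) summable_on UNIV" by (rule abs_summable_summable)
  have "mult (mult f g) h n = (\<Sum>\<^sub>\<infinity>k. \<Sum>\<^sub>\<infinity>i. ?F k i)"
    unfolding mult_def by (simp add: infsum_cmult_left')
  also have "\<dots> = (\<Sum>\<^sub>\<infinity>i. \<Sum>\<^sub>\<infinity>k. ?F k i)"
    using sum2 by (intro infsum_swap_banach) (simp add: case_prod_beta)
  also have "\<dots> = (\<Sum>\<^sub>\<infinity>i. f i * (\<Sum>\<^sub>\<infinity>k. g (k - i) * h (n - k)))"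
    by (simp add: infsum_cmult_right'[symmetric] mult.assoc)
  also have "\<dots> = (\<Sum>\<^sub>\<infinity>i. f i * (\<Sum>\<^sub>\<infinity>j. g j * h (n - i - j)))"
  proof -
    have "(\<Sum>\<^sub>\<infinity>k. g (k - i) * h (n - k)) = (\<Sum>\<^sub>\<infinity>j. g j * h (n - i - j))" for i
      by (rule infsum_reindex_bij_witness[where i="\<lambda>j. j + i" and j="\<lambda>k. k - i"]) auto
    thus ?thesis by simp
  qed
  also have "\<dots> = mult f (mult g h) n" unfolding mult_def by simp
  finally show "mult (mult f g) h n = mult f (mult g h) n" .
qed

lemma mult_mult_swap: assumes "l1 f" "l1 g" "l1 h" "l1 k"
  shows "mult (mult f g) (mult h k) = mult (mult f h) (mult g k)"
proof -
  have b: "bounded_seq k" "bounded_seq (mult h k)" "bounded_seq (mult g k)"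
    using assms by (auto intro: l1_bounded_seq l1_mult)
  have "mult (mult f g) (mult h k) = mult f (mult g (mult h k))"
    by (rule mult_assoc) (use assms b in auto)
  also have "mult g (mult h k) = mult (mult g h) k" by (rule mult_assoc[symmetric]) (use assms b in auto)
  also have "mult g h = mult h g" by (rule mult_comm)
  also have "mult (mult h g) k = mult h (mult g k)" by (rule mult_assoc) (use assms b in auto)
  also have "mult f (mult h (mult g k)) = mult (mult f h) (mult g k)"
    by (rule mult_assoc[symmetric]) (use assms b l1_mult in auto)
  finally show ?thesis .
qed

lemma L2_reflect: assumes "x \<in> L2" shows "(\<lambda>k. x (c - k)) \<in> L2"
  using assms unfolding L2_iff
  using summable_on_reindex_bij_betw[OF bij_betw_minus_int, of "\<lambda>n. (cmod (x n))\<^sup>2" c] by simp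

lemma summable_on_conv_L2: assumes "f \<in> L2" "x \<in> L2"
  shows "(\<lambda>k. f k * x (n - k)) summable_on UNIV"
proof -
  have "(\<lambda>k. cmod (f k) * cmod (x (n - k))) summable_on UNIV"
    by (rule L2_prod_abs(1)[OF assms(1) L2_reflect[OF assms(2)]])
  thus ?thesis by (simp add: summable_on_iff_abs_summable_on_complex norm_mult)
qed

lemma mult_lincomb_right: assumes "f \<in> L2" "x \<in> L2" "y \<in> L2"
  shows "mult f (\<lambda>n. c * x n + y n) = (\<lambda>n. c * mult f x n + mult f y n)"
proof
  fix n
  have "mult f (\<lambda>n. c * x n + y n) n = (\<Sum>\<^sub>\<infinity>k. c * (f k * x (n - k)) + f k * y (n - k))"
    unfolding mult_def by (simp add: algebra_simps)
  also have "\<dots> = (\<Sum>\<^sub>\<infinity>k. c * (f k * x (n - k))) + (\<Sum>\<^sub>\<infinity>k. f k * y (n - k))"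
    by (intro infsum_add summable_on_cmult_right summable_on_conv_L2 assms)
  also have "\<dots> = c * mult f x n + mult f y n"
    unfolding mult_def by (simp add: infsum_cmult_right')
  finally show "mult f (\<lambda>n. c * x n + y n) n = c * mult f x n + mult f y n" .
qed

lemma mult_zero_right: "mult f (\<lambda>n. 0) = (\<lambda>n. 0)"
  unfolding mult_def by simp

lemma mult_scale_right: "mult f (\<lambda>m. c * x m) = (\<lambda>m. c * mult f x m)"
  unfolding mult_def by (simp add: infsum_cmult_right'[symmetric] mult.left_commute)

lemma mult_sum_right: "finite K \<Longrightarrow> f \<in> L2 \<Longrightarrow> (\<And>k. k \<in> K \<Longrightarrow> x k \<in> L2) \<Longrightarrow>
   mult f (\<lambda>m. \<Sum>k\<in>K. c k * x k m) = (\<lambda>m. \<Sum>k\<in>K. c k * mult f (x k) m)"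
proof (induction K rule: finite_induct)
  case empty thus ?case by (simp add: mult_zero_right)
next
  case (insert k K)
  have "mult f (\<lambda>m. \<Sum>j\<in>insert k K. c j * x j m) = mult f (\<lambda>m. c k * x k m + (\<Sum>j\<in>K. c j * x j m))"
    using insert by simp
  also have "\<dots> = (\<lambda>m. c k * mult f (x k) m + mult f (\<lambda>m. \<Sum>j\<in>K. c j * x j m) m)"
    using insert by (intro mult_lincomb_right L2_sum) auto
  finally show ?case using insert by simp
qed

lemma mult_one_left: "mult one_seq x = x"
proof
  fix n
  have "mult one_seq x n = (\<Sum>\<^sub>\<infinity>k\<in>{0}. one_seq k * x (n - k))"
    unfolding mult_def by (intro infsum_cong_neutral) (auto simp: one_seq_def)
  thus "mult one_seq x n = x n" by (simp add: one_seq_def)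
qed

lemma mult_one_right: "mult x one_seq = x"
  by (simp add: mult_comm mult_one_left)

lemma mult_affine_seq: "mult (affine_seq p q) x n = p * x n + q * x (n - 1)"
proof -
  have "mult (affine_seq p q) x n = (\<Sum>\<^sub>\<infinity>k\<in>{0,1}. affine_seq p q k * x (n - k))"
    unfolding mult_def by (intro infsum_cong_neutral) (auto simp: affine_seq_def)
  thus ?thesis by (simp add: affine_seq_def)
qed

lemma l1_affine_seq: "l1 (affine_seq p q)"
proof -
  have "(\<lambda>n. cmod (affine_seq p q n)) summable_on {0,1}" by simp
  thus ?thesis unfolding l1_def
    by (rule summable_on_cong_neutral[THEN iffD1, rotated -1]) (auto simp: affine_seq_def)
qed

lemma l1_one_seq: "l1 one_seq"
proof -
  have "one_seq = affine_seq 1 0" by (auto simp: one_seq_def affine_seq_def)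
  show ?thesis by (subst \<open>one_seq = affine_seq 1 0\<close>) (rule l1_affine_seq)
qed

lemma l1_zero: "l1 (\<lambda>n. 0)" unfolding l1_def by simp

lemma l1_scale: "l1 f \<Longrightarrow> l1 (\<lambda>n. c * f n)"
  unfolding l1_def by (simp add: norm_mult summable_on_cmult_right)

lemma l1_lincomb: assumes "l1 f" "l1 g" shows "l1 (\<lambda>n. c * f n + g n)"
proof -
  have "(\<lambda>n. cmod c * cmod (f n) + cmod (g n)) summable_on UNIV"
    using assms unfolding l1_def by (intro summable_on_add summable_on_cmult_right)
  thus ?thesis unfolding l1_def
    by (rule summable_on_comparison_test)
       (auto simp: norm_mult[symmetric] intro: norm_triangle_ineq[THEN order_trans])
qed

lemma l1_sum: "finite K \<Longrightarrow> (\<And>k. k \<in> K \<Longrightarrow> l1 (x k)) \<Longrightarrow> l1 (\<lambda>m. \<Sum>k\<in>K. c k * x k m)"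
proof (induction K rule: finite_induct)
  case empty thus ?case by (simp add: l1_zero)
next
  case (insert k K) thus ?case by (simp add: l1_lincomb)
qed

lemma cnj_seq_cnj_seq: "cnj_seq (cnj_seq f) = f" unfolding cnj_seq_def by simp

lemma l1_cnj_seq: assumes "l1 f" shows "l1 (cnj_seq f)"
  using assms unfolding l1_def cnj_seq_def
  using summable_on_reindex_bij_betw[OF bij_betw_minus_int, of "\<lambda>n. cmod (f n)" 0] by simp

lemma cnj_seq_mult: "cnj_seq (mult f g) = mult (cnj_seq f) (cnj_seq g)"
proof
  fix n
  have "cnj_seq (mult f g) n = (\<Sum>\<^sub>\<infinity>k. cnj (f k) * cnj (g (- n - k)))"
    unfolding cnj_seq_def mult_def by (subst infsum_cnj[symmetric]) simp
  also have "\<dots> = (\<Sum>\<^sub>\<infinity>k. cnj (f (- k)) * cnj (g (- n - (- k))))"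
    by (rule infsum_reindex_bij_witness[where i="\<lambda>k. - k" and j="\<lambda>k. - k"]) auto
  also have "\<dots> = mult (cnj_seq f) (cnj_seq g) n" unfolding cnj_seq_def mult_def
    by (intro infsum_cong) (simp add: algebra_simps)
  finally show "cnj_seq (mult f g) n = mult (cnj_seq f) (cnj_seq g) n" .
qed

lemma cnj_seq_one: "cnj_seq one_seq = one_seq" unfolding cnj_seq_def one_seq_def by auto

lemma conj_z_mult: "conj_z (mult f g) = mult (cnj_seq f) (conj_z g)"
proof
  fix m
  have "conj_z (mult f g) m = (\<Sum>\<^sub>\<infinity>k. cnj (f k) * cnj (g (- m - 1 - k)))"
    unfolding conj_z_def mult_def by (subst infsum_cnj[symmetric]) simp
  also have "\<dots> = (\<Sum>\<^sub>\<infinity>k. cnj (f (- k)) * cnj (g (- m - 1 - (- k))))"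
    by (rule infsum_reindex_bij_witness[where i="\<lambda>k. - k" and j="\<lambda>k. - k"]) auto
  also have "\<dots> = mult (cnj_seq f) (conj_z g) m" unfolding cnj_seq_def mult_def conj_z_def
    by (intro infsum_cong) (simp add: algebra_simps)
  finally show "conj_z (mult f g) m = mult (cnj_seq f) (conj_z g) m" .
qed

lemma l1_conj_z: assumes "l1 f" shows "l1 (conj_z f)"
proof -
  have "(\<lambda>n. cmod (f (- 1 - n))) summable_on UNIV"
    using assms unfolding l1_def
    using summable_on_reindex_bij_betw[OF bij_betw_minus_int, of "\<lambda>n. cmod (f n)" "-1"] by simp
  moreover have "(\<lambda>n. cmod (f (- 1 - n))) = (\<lambda>n. cmod (f (- n - 1)))"
    by (rule ext, rule arg_cong[where f="\<lambda>m. cmod (f m)"]) simp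
  ultimately show ?thesis unfolding l1_def conj_z_def by simp
qed

lemma causal_mult: "causal f \<Longrightarrow> causal g \<Longrightarrow> causal (mult f g)"
  unfolding causal_def mult_def
proof (intro allI impI)
  fix n :: int assume f: "\<forall>n<0. f n = 0" and g: "\<forall>n<0. g n = 0" and n: "n < 0"
  have "f k * g (n - k) = 0" for k
  proof (cases "k < 0")
    case True thus ?thesis using f by simp
  next
    case False hence "n - k < 0" using n by simp
    thus ?thesis using g by simp
  qed
  hence "(\<lambda>k. f k * g (n - k)) = (\<lambda>k. 0)" by (simp add: fun_eq_iff)
  thus "(\<Sum>\<^sub>\<infinity>k. f k * g (n - k)) = 0" by simp
qed

lemma causal_one_seq: "causal one_seq" unfolding causal_def one_seq_def by auto

lemma causal_affine_seq: "causal (affine_seq p q)" unfolding causal_def affine_seq_def by auto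

lemma sq_le_mult_if_forall_am_gm:
  fixes x A B :: real
  assumes "x \<ge> 0" "A \<ge> 0" "B \<ge> 0"
    and bound: "\<And>t. t > 0 \<Longrightarrow> x \<le> A / (2 * t) + t * B / 2"
  shows "x\<^sup>2 \<le> A * B"
proof (cases "A > 0 \<and> B > 0")
  case True
  define t where "t = sqrt (A / B)"
  have t: "t > 0" "t * t = A / B" unfolding t_def using True by simp_all
  have "A / (2 * t) = t * B / 2" using t True by (simp add: field_simps)
  hence "x \<le> t * B" using bound[OF t(1)] by simp
  hence "x\<^sup>2 \<le> (t * B)\<^sup>2" using assms(1) by (simp add: power_mono)
  also have "\<dots> = A * B" using t True by (simp add: power2_eq_square field_simps)
  finally show ?thesis .
next
  case False
  have "x \<le> 0"
  proof (rule ccontr)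
    assume "\<not> x \<le> 0"
    hence x: "x > 0" by simp
    show False
    proof (cases "A = 0")
      case True
      have "x \<le> x / (B + 1) * B / 2" using bound[of "x / (B + 1)"] x assms(3) True by simp
      moreover have "x / (B + 1) * B / 2 < x"
        using x assms(3) by (simp add: field_simps add_nonneg_pos)
      ultimately show False by simp
    next
      case False
      hence "B = 0" using \<open>\<not> (A > 0 \<and> B > 0)\<close> assms(2,3) by simp
      have "x \<le> A / (2 * (A / x))" using bound[of "A / x"] x assms(2) False \<open>B = 0\<close> by simp
      also have "\<dots> = x / 2" using x assms(2) False by (simp add: field_simps)
      finally show False using x by simp
    qed
  qed
  thus ?thesis using assms by simp
qed

lemma infsum_weighted_cauchy_schwarz:
  fixes w a :: "int \<Rightarrow> real"
  assumes w0: "\<And>i. w i \<ge> 0" and a0: "\<And>i. a i \<ge> 0"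
    and sw: "w summable_on UNIV" and swa: "(\<lambda>i. w i * a i) summable_on UNIV"
    and swa2: "(\<lambda>i. w i * (a i)\<^sup>2) summable_on UNIV"
  shows "(\<Sum>\<^sub>\<infinity>i. w i * a i)\<^sup>2 \<le> (\<Sum>\<^sub>\<infinity>i. w i * (a i)\<^sup>2) * (\<Sum>\<^sub>\<infinity>i. w i)"
proof (rule sq_le_mult_if_forall_am_gm)
  show "(\<Sum>\<^sub>\<infinity>i. w i * a i) \<ge> 0" "(\<Sum>\<^sub>\<infinity>i. w i * (a i)\<^sup>2) \<ge> 0" "(\<Sum>\<^sub>\<infinity>i. w i) \<ge> 0"
    by (intro infsum_nonneg; simp add: w0 a0)+
  fix t :: real assume t: "t > 0"
  have pt: "w i * a i \<le> w i * (a i)\<^sup>2 / (2 * t) + t * w i / 2" for i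
  proof -
    have "2 * t * a i \<le> (a i)\<^sup>2 + t\<^sup>2"
      using sum_squares_bound[of t "a i"] by (simp add: mult.commute)
    hence "a i \<le> (a i)\<^sup>2 / (2 * t) + t / 2"
      using t by (simp add: field_simps power2_eq_square)
    hence "w i * a i \<le> w i * ((a i)\<^sup>2 / (2 * t) + t / 2)"
      by (intro mult_left_mono w0)
    thus ?thesis by (simp add: algebra_simps)
  qed
  have s1: "(\<lambda>i. w i * (a i)\<^sup>2 / (2 * t)) summable_on UNIV"
    using summable_on_cmult_left[OF swa2, of "1 / (2 * t)"] by simp
  have s2: "(\<lambda>i. t * w i / 2) summable_on UNIV"
    using summable_on_cmult_left[OF sw, of "t / 2"] by (simp add: mult.commute)
  have "(\<Sum>\<^sub>\<infinity>i. w i * a i) \<le> (\<Sum>\<^sub>\<infinity>i. w i * (a i)\<^sup>2 / (2 * t) + t * w i / 2)"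
    by (intro infsum_mono swa summable_on_add s1 s2 pt)
  also have "\<dots> = (\<Sum>\<^sub>\<infinity>i. w i * (a i)\<^sup>2 / (2 * t)) + (\<Sum>\<^sub>\<infinity>i. t * w i / 2)"
    by (intro infsum_add s1 s2)
  also have "\<dots> = (\<Sum>\<^sub>\<infinity>i. w i * (a i)\<^sup>2) / (2 * t) + t * (\<Sum>\<^sub>\<infinity>i. w i) / 2"
    using infsum_cmult_left'[of "\<lambda>i. w i * (a i)\<^sup>2" "1/(2*t)" UNIV]
      infsum_cmult_right'[of "t/2" w UNIV] by (simp add: mult.commute)
  finally show "(\<Sum>\<^sub>\<infinity>i. w i * a i) \<le> (\<Sum>\<^sub>\<infinity>i. w i * (a i)\<^sup>2) / (2 * t) + t * (\<Sum>\<^sub>\<infinity>i. w i) / 2" .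
qed

lemma summable_on_conv_sq:
  assumes "l1 f" "x \<in> L2"
  shows "(\<lambda>n. \<Sum>\<^sub>\<infinity>i. cmod (f i) * (cmod (x (n - i)))\<^sup>2) summable_on UNIV"
proof -
  have "(\<lambda>m. cmod (f i) * (cmod (x m))\<^sup>2) summable_on UNIV" for i
    using assms(2) unfolding L2_iff by (intro summable_on_cmult_right)
  moreover have "(\<lambda>i. \<Sum>\<^sub>\<infinity>m. cmod (f i) * (cmod (x m))\<^sup>2) summable_on UNIV"
    using summable_on_cmult_left[of "\<lambda>i. cmod (f i)" UNIV "l2norm_sq x"] assms(1)
    unfolding l1_def l2norm_sq_def by (simp add: infsum_cmult_right')
  ultimately have "(\<lambda>(i,m). cmod (f i) * (cmod (x m))\<^sup>2) summable_on UNIV"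
    using summable_on_Sigma_nonneg_iff[of "\<lambda>(i,m). cmod (f i) * (cmod (x m))\<^sup>2"] by auto
  moreover have "(\<lambda>(n,i). cmod (f i) * (cmod (x (n - i)))\<^sup>2) =
        (\<lambda>p. (\<lambda>(i,m). cmod (f i) * (cmod (x m))\<^sup>2) ((\<lambda>(n, i). (i, n - i)) p))"
    by (auto simp: fun_eq_iff)
  ultimately have "(\<lambda>(n,i). cmod (f i) * (cmod (x (n - i)))\<^sup>2) summable_on UNIV"
    using summable_on_reindex_bij_betw[OF bij_betw_conv_index,
        of "\<lambda>(i,m). cmod (f i) * (cmod (x m))\<^sup>2"] by simp
  thus ?thesis
    using summable_on_Sigma_nonneg_iff[of "\<lambda>(n,i). cmod (f i) * (cmod (x (n - i)))\<^sup>2"] by auto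
qed

text \<open>Young's inequality \<open>\<ell>\<^sup>1 * \<ell>\<^sup>2 \<subseteq> \<ell>\<^sup>2\<close>: by Cauchy--Schwarz with weights \<open>|f i|\<close>,
  \<open>|(f * x) n|\<^sup>2 \<le> \<parallel>f\<parallel>\<^sub>1 \<Sum>\<^sub>i |f i| |x (n - i)|\<^sup>2\<close>, which is summable in \<open>n\<close>.\<close>
lemma L2_mult_l1: assumes "l1 f" "x \<in> L2" shows "mult f x \<in> L2"
proof -
  define S2 where "S2 n = (\<Sum>\<^sub>\<infinity>i. cmod (f i) * (cmod (x (n - i)))\<^sup>2)" for n
  have xb: "cmod (x n) \<le> sqrt (l2norm_sq x)" for n by (rule L2_bound[OF assms(2)])
  have "(\<lambda>n. S2 n * l1norm f) summable_on UNIV"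
    unfolding S2_def by (intro summable_on_cmult_left summable_on_conv_sq assms)
  moreover have "(cmod (mult f x n))\<^sup>2 \<le> S2 n * l1norm f" for n
  proof -
    have sa: "(\<lambda>i. cmod (f i) * cmod (x (n - i))) summable_on UNIV"
    proof (rule summable_on_comparison_test)
      show "(\<lambda>i. cmod (f i) * sqrt (l2norm_sq x)) summable_on UNIV"
        using assms(1) unfolding l1_def by (intro summable_on_cmult_left)
    qed (auto intro: mult_left_mono xb)
    have sa2: "(\<lambda>i. cmod (f i) * (cmod (x (n - i)))\<^sup>2) summable_on UNIV"
    proof (rule summable_on_comparison_test)
      show "(\<lambda>i. cmod (f i) * (sqrt (l2norm_sq x))\<^sup>2) summable_on UNIV"
        using assms(1) unfolding l1_def by (intro summable_on_cmult_left)
      show "cmod (f i) * (cmod (x (n - i)))\<^sup>2 \<le> cmod (f i) * (sqrt (l2norm_sq x))\<^sup>2" for i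
        by (intro mult_left_mono power_mono xb) auto
    qed auto
    have "cmod (mult f x n) \<le> (\<Sum>\<^sub>\<infinity>i. cmod (f i) * cmod (x (n - i)))"
      unfolding mult_def using norm_infsum_bound[of "\<lambda>i. f i * x (n - i)" UNIV] sa
      by (simp add: norm_mult)
    hence "(cmod (mult f x n))\<^sup>2 \<le> (\<Sum>\<^sub>\<infinity>i. cmod (f i) * cmod (x (n - i)))\<^sup>2"
      by (intro power_mono) auto
    also have "\<dots> \<le> S2 n * l1norm f" unfolding l1norm_def S2_def
      using assms(1) unfolding l1_def by (intro infsum_weighted_cauchy_schwarz sa sa2) auto
    finally show ?thesis .
  qed
  ultimately show ?thesis unfolding L2_iff by (rule summable_on_comparison_test) auto
qed

lemma summable_on_conv_ip_abs:
  assumes "l1 f" "x \<in> L2" "y \<in> L2"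
  shows "(\<lambda>(n,i). cmod (f i) * (cmod (x (n - i)) * cmod (y n))) summable_on UNIV"
proof -
  define C where "C = l2norm_sq x + l2norm_sq y"
  have inner: "(\<lambda>n. cmod (x (n - i)) * cmod (y n)) summable_on UNIV" for i
    by (rule L2_prod_abs(1)[OF L2_shift(1)[OF assms(2)] assms(3)])
  have inner_bound: "(\<Sum>\<^sub>\<infinity>n. cmod (x (n - i)) * cmod (y n)) \<le> C" for i
    using L2_prod_abs(2)[OF L2_shift(1)[OF assms(2)] assms(3)] L2_shift(2)[OF assms(2)]
    unfolding C_def by simp
  have "(\<lambda>n. cmod (f i) * (cmod (x (n - i)) * cmod (y n))) summable_on UNIV" for i
    by (intro summable_on_cmult_right inner)
  moreover have "(\<lambda>i. \<Sum>\<^sub>\<infinity>n. cmod (f i) * (cmod (x (n - i)) * cmod (y n))) summable_on UNIV"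
  proof (rule summable_on_comparison_test)
    show "(\<lambda>i. cmod (f i) * C) summable_on UNIV"
      using assms(1) unfolding l1_def by (intro summable_on_cmult_left)
    show "(\<Sum>\<^sub>\<infinity>n. cmod (f i) * (cmod (x (n - i)) * cmod (y n))) \<le> cmod (f i) * C" for i
      using mult_left_mono[OF inner_bound, of "cmod (f i)" i] by (simp add: infsum_cmult_right')
  qed (auto intro: infsum_nonneg)
  ultimately have "(\<lambda>(i,n). cmod (f i) * (cmod (x (n - i)) * cmod (y n))) summable_on UNIV"
    using summable_on_Sigma_nonneg_iff[of "\<lambda>(i,n). cmod (f i) * (cmod (x (n - i)) * cmod (y n))"]
    by auto
  thus ?thesis
    using summable_on_swap_int[of "\<lambda>(i,n). cmod (f i) * (cmod (x (n - i)) * cmod (y n))"]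
    by (simp add: case_prod_unfold)
qed

text \<open>Convolution with \<open>f\<close> and with \<open>cnj_seq f\<close> are adjoint: substitute \<open>(n, i) \<mapsto> (n - i, -i)\<close>
  in the absolutely convergent double sum.\<close>
lemma ip_mult_left:
  assumes "l1 f" "x \<in> L2" "y \<in> L2"
  shows "ip (mult f x) y = ip x (mult (cnj_seq f) y)"
proof -
  define F where "F = (\<lambda>(n,i). f i * x (n - i) * cnj (y n))"
  have "(\<lambda>p. norm (F p)) summable_on UNIV"
    using summable_on_conv_ip_abs[OF assms]
    unfolding F_def by (simp add: case_prod_unfold norm_mult mult.assoc)
  hence sF: "F summable_on UNIV" by (rule abs_summable_summable)
  have sF': "(\<lambda>(m,i). F (m - i, - i)) summable_on UNIV"
    using summable_on_reindex_bij_witness[where i="\<lambda>(n,i). (n - i, - i)" and j="\<lambda>(m,i). (m - i, - i)"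
        and S=UNIV and T=UNIV and g="\<lambda>(m,i). F (m - i, - i)" and h=F] sF by auto
  have "ip (mult f x) y = (\<Sum>\<^sub>\<infinity>n. \<Sum>\<^sub>\<infinity>i. F (n, i))"
    unfolding ip_def mult_def F_def by (simp add: infsum_cmult_left')
  also have "\<dots> = infsum F UNIV"
    using infsum_Sigma_banach[of F UNIV "\<lambda>_. UNIV"] sF by simp
  also have "\<dots> = infsum (\<lambda>(m,i). F (m - i, - i)) UNIV"
    by (rule infsum_reindex_bij_witness[where i="\<lambda>(n,i). (n - i, - i)" and j="\<lambda>(m,i). (m - i, - i)"])
       auto
  also have "\<dots> = (\<Sum>\<^sub>\<infinity>m. \<Sum>\<^sub>\<infinity>i. F (m - i, - i))"
    using infsum_Sigma_banach[of "\<lambda>(m,i). F (m - i, - i)" UNIV "\<lambda>_. UNIV"] sF' by simp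
  also have "\<dots> = ip x (mult (cnj_seq f) y)"
  proof -
    have "cnj (\<Sum>\<^sub>\<infinity>k. cnj (f (- k)) * y (m - k)) = (\<Sum>\<^sub>\<infinity>k. f (- k) * cnj (y (m - k)))" for m
      by (subst infsum_cnj[symmetric]) simp
    hence "ip x (mult (cnj_seq f) y) = (\<Sum>\<^sub>\<infinity>m. x m * (\<Sum>\<^sub>\<infinity>k. f (- k) * cnj (y (m - k))))"
      unfolding ip_def mult_def cnj_seq_def by simp
    also have "\<dots> = (\<Sum>\<^sub>\<infinity>m. \<Sum>\<^sub>\<infinity>i. F (m - i, - i))"
      unfolding F_def by (simp add: infsum_cmult_right'[symmetric] mult.assoc mult.left_commute)
    finally show ?thesis by simp
  qed
  finally show ?thesis .
qed

lemma ip_mult_isometry: assumes "l1 f" "mult (cnj_seq f) f = one_seq" "x \<in> L2" "y \<in> L2"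
  shows "ip (mult f x) (mult f y) = ip x y"
proof -
  have "ip (mult f x) (mult f y) = ip x (mult (cnj_seq f) (mult f y))"
    by (rule ip_mult_left) (use assms L2_mult_l1 in auto)
  also have "mult (cnj_seq f) (mult f y) = mult (mult (cnj_seq f) f) y"
    by (rule mult_assoc[symmetric]) (use assms l1_cnj_seq L2_bounded_seq in auto)
  finally show ?thesis by (simp add: assms mult_one_left)
qed

section \<open>Coefficients of the Blaschke factor\<close>

lemma has_sum_geometric_int:
  fixes z :: "'a::{real_normed_field,banach}"
  assumes "norm z < 1"
  shows "((\<lambda>n::int. if n < 0 then 0 else z ^ nat n) has_sum (1 / (1 - z))) UNIV"
proof -
  have h: "((\<lambda>n::nat. z ^ n) has_sum (1 / (1 - z))) UNIV"
    by (rule norm_summable_imp_has_sum)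
       (auto simp: norm_power summable_geometric geometric_sums assms)
  have b: "bij_betw int UNIV {0..}"
    by (rule bij_betwI[where g=nat]) auto
  have "((\<lambda>n::int. if n < 0 then 0 else z ^ nat n) has_sum (1 / (1 - z))) {0..}"
    using has_sum_reindex_bij_betw[OF b, of "\<lambda>n::int. if n < 0 then 0 else z ^ nat n"] h by simp
  thus ?thesis
    by (rule has_sum_cong_neutral[THEN iffD1, rotated -1]) auto
qed

text \<open>Coefficients of the Szego kernel \<open>k\<^sub>a(z) = 1 / (1 - cnj a z)\<close>, of \<open>1 / (z - a)\<close>
  (the function \<open>conj (z k\<^sub>a)\<close> on the circle), of \<open>b\<^sub>a = (z - a) k\<^sub>a\<close> and of \<open>b\<^sub>a\<^sup>n\<close>.\<close>

definition kernel_seq :: "complex \<Rightarrow> seq" where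
  "kernel_seq a = (\<lambda>n. if n < 0 then 0 else (cnj a) ^ nat n)"
definition pole_seq :: "complex \<Rightarrow> seq" where
  "pole_seq a = (\<lambda>n. cnj (kernel_seq a (- n - 1)))"
definition blaschke_seq :: "complex \<Rightarrow> seq" where
  "blaschke_seq a = mult (affine_seq (- a) 1) (kernel_seq a)"
primrec bpow_seq :: "complex \<Rightarrow> nat \<Rightarrow> seq" where
  "bpow_seq a 0 = one_seq"
| "bpow_seq a (Suc n) = mult (blaschke_seq a) (bpow_seq a n)"

lemma pole_seq_alt: "pole_seq a n = (if n < 0 then a ^ nat (- n - 1) else 0)"
  unfolding pole_seq_def kernel_seq_def by auto

lemma causal_kernel_seq: "causal (kernel_seq a)" unfolding causal_def kernel_seq_def by auto

lemma causal_blaschke_seq: "causal (blaschke_seq a)"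
  unfolding blaschke_seq_def by (intro causal_mult causal_affine_seq causal_kernel_seq)

lemma causal_bpow_seq: "causal (bpow_seq a n)"
  by (induction n) (auto intro: causal_mult causal_blaschke_seq causal_one_seq)

lemma mult_denominator_kernel_seq: "mult (affine_seq 1 (- cnj a)) (kernel_seq a) = one_seq"
proof
  fix n
  show "mult (affine_seq 1 (- cnj a)) (kernel_seq a) n = one_seq n"
    unfolding mult_affine_seq
  proof (cases "n \<le> 0")
    case True thus "1 * kernel_seq a n + - cnj a * kernel_seq a (n - 1) = one_seq n"
      by (cases "n = 0") (auto simp: kernel_seq_def one_seq_def)
  next
    case False
    hence "nat n = Suc (nat (n - 1))" by simp
    thus "1 * kernel_seq a n + - cnj a * kernel_seq a (n - 1) = one_seq n" using False
      by (auto simp: kernel_seq_def one_seq_def)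
  qed
qed

lemma mult_numerator_pole_seq: "mult (affine_seq (- a) 1) (pole_seq a) = one_seq"
proof
  fix n
  show "mult (affine_seq (- a) 1) (pole_seq a) n = one_seq n"
  proof (cases "n < 0")
    case True
    hence "nat (- (n - 1) - 1) = Suc (nat (- n - 1))" by simp
    thus ?thesis using True by (auto simp: mult_affine_seq pole_seq_alt one_seq_def)
  next
    case False
    thus ?thesis by (cases "n = 0") (auto simp: mult_affine_seq pole_seq_alt one_seq_def)
  qed
qed

lemma cnj_blaschke_seq: "cnj_seq (blaschke_seq a) = mult (affine_seq 1 (- cnj a)) (pole_seq a)"
proof
  fix n
  have "blaschke_seq a m = - a * kernel_seq a m + kernel_seq a (m - 1)" for m
    unfolding blaschke_seq_def mult_affine_seq by simp
  moreover have "cnj (- a * kernel_seq a (- n) + kernel_seq a (- n - 1)) =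
      pole_seq a n - cnj a * pole_seq a (n - 1)"
  proof (cases "n < 0")
    case True
    hence "nat (- n) = Suc (nat (- n - 1))" by simp
    thus ?thesis using True by (auto simp: kernel_seq_def pole_seq_alt)
  next
    case False
    thus ?thesis by (cases "n = 0") (auto simp: kernel_seq_def pole_seq_alt)
  qed
  ultimately show "cnj_seq (blaschke_seq a) n = mult (affine_seq 1 (- cnj a)) (pole_seq a) n"
    unfolding cnj_seq_def mult_affine_seq by simp
qed

context
  fixes a :: complex
  assumes a1: "cmod a < 1"
begin

lemma l1_kernel_seq: "l1 (kernel_seq a)"
proof -
  have "(\<lambda>n. cmod (kernel_seq a n)) = (\<lambda>n::int. if n < 0 then 0 else (cmod a) ^ nat n)"
    by (auto simp: kernel_seq_def norm_power)
  moreover have "(\<lambda>n::int. if n < 0 then 0 else (cmod a) ^ nat n) summable_on UNIV"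
    using has_sum_geometric_int[of "cmod a"] a1 by (auto simp: summable_on_def)
  ultimately show ?thesis unfolding l1_def by simp
qed

lemma l1_pole_seq: "l1 (pole_seq a)"
  using l1_conj_z[OF l1_kernel_seq] unfolding conj_z_def pole_seq_def .

lemma L2_kernel_seq: "kernel_seq a \<in> L2" using l1_L2 l1_kernel_seq by auto

lemma l1_blaschke_seq: "l1 (blaschke_seq a)"
  unfolding blaschke_seq_def by (intro l1_mult l1_affine_seq l1_kernel_seq)

lemma l1_bpow_seq: "l1 (bpow_seq a n)"
  by (induction n) (auto intro: l1_mult l1_blaschke_seq l1_one_seq)

text \<open>\<open>|b\<^sub>a| = 1\<close> on the circle: \<open>b\<^sub>a conj b\<^sub>a = ((z - a) k\<^sub>a) ((1 - cnj a z) / (z - a))\<close>.\<close>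
lemma blaschke_seq_mult_cnj_self: "mult (blaschke_seq a) (cnj_seq (blaschke_seq a)) = one_seq"
proof -
  let ?u = "affine_seq 1 (- cnj a)" and ?v = "affine_seq (- a) 1"
  have l1: "l1 ?u" "l1 ?v" "l1 (kernel_seq a)" "l1 (pole_seq a)"
    by (auto intro: l1_affine_seq l1_kernel_seq l1_pole_seq)
  have "mult (blaschke_seq a) (cnj_seq (blaschke_seq a)) = mult (mult ?v (kernel_seq a)) (mult ?u (pole_seq a))"
    by (subst cnj_blaschke_seq) (simp add: blaschke_seq_def)
  also have "\<dots> = mult (mult ?v ?u) (mult (kernel_seq a) (pole_seq a))"
    by (rule mult_mult_swap) (use l1 in auto)
  also have "mult ?v ?u = mult ?u ?v" by (rule mult_comm)
  also have "mult (mult ?u ?v) (mult (kernel_seq a) (pole_seq a)) = mult (mult ?u (kernel_seq a)) (mult ?v (pole_seq a))"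
    by (rule mult_mult_swap) (use l1 in auto)
  also have "\<dots> = one_seq" by (simp add: mult_denominator_kernel_seq mult_numerator_pole_seq mult_one_left)
  finally show ?thesis .
qed

lemma cnj_blaschke_seq_mult_self: "mult (cnj_seq (blaschke_seq a)) (blaschke_seq a) = one_seq"
  using blaschke_seq_mult_cnj_self by (simp add: mult_comm)

lemma blaschke_seq_pole_seq: "mult (blaschke_seq a) (pole_seq a) = kernel_seq a"
proof -
  have "mult (blaschke_seq a) (pole_seq a) = mult (mult (kernel_seq a) (affine_seq (- a) 1)) (pole_seq a)"
    by (simp add: blaschke_seq_def mult_comm)
  also have "\<dots> = mult (kernel_seq a) (mult (affine_seq (- a) 1) (pole_seq a))"
    by (rule mult_assoc) (auto intro: l1_bounded_seq l1_affine_seq l1_kernel_seq l1_pole_seq)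
  also have "\<dots> = kernel_seq a" by (simp add: mult_numerator_pole_seq mult_one_right)
  finally show ?thesis .
qed

lemma cnj_blaschke_seq_kernel_seq: "mult (cnj_seq (blaschke_seq a)) (kernel_seq a) = pole_seq a"
proof -
  have "mult (cnj_seq (blaschke_seq a)) (kernel_seq a) =
        mult (mult (pole_seq a) (affine_seq 1 (- cnj a))) (kernel_seq a)"
    by (simp add: cnj_blaschke_seq mult_comm)
  also have "\<dots> = mult (pole_seq a) (mult (affine_seq 1 (- cnj a)) (kernel_seq a))"
    by (rule mult_assoc) (auto intro: l1_bounded_seq l1_affine_seq l1_kernel_seq l1_pole_seq)
  also have "\<dots> = pole_seq a" by (simp add: mult_denominator_kernel_seq mult_one_right)
  finally show ?thesis .
qed

lemma bpow_seq_add: "bpow_seq a (m + n) = mult (bpow_seq a m) (bpow_seq a n)"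
proof (induction m)
  case 0 thus ?case by (simp add: mult_one_left)
next
  case (Suc m)
  have "bpow_seq a (Suc m + n) = mult (blaschke_seq a) (mult (bpow_seq a m) (bpow_seq a n))" by (simp add: Suc)
  also have "\<dots> = mult (mult (blaschke_seq a) (bpow_seq a m)) (bpow_seq a n)"
    by (rule mult_assoc[symmetric]) (auto intro: l1_bounded_seq l1_bpow_seq l1_blaschke_seq a1)
  finally show ?case by simp
qed

lemma cnj_bpow_seq_mult_self: "mult (cnj_seq (bpow_seq a n)) (bpow_seq a n) = one_seq"
proof (induction n)
  case 0 thus ?case by (simp add: cnj_seq_one mult_one_left)
next
  case (Suc n)
  have "mult (cnj_seq (bpow_seq a (Suc n))) (bpow_seq a (Suc n)) =
        mult (mult (cnj_seq (blaschke_seq a)) (cnj_seq (bpow_seq a n))) (mult (blaschke_seq a) (bpow_seq a n))"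
    by (simp add: cnj_seq_mult)
  also have "\<dots> = mult (mult (cnj_seq (blaschke_seq a)) (blaschke_seq a)) (mult (cnj_seq (bpow_seq a n)) (bpow_seq a n))"
    by (rule mult_mult_swap) (auto intro: l1_cnj_seq l1_bpow_seq l1_blaschke_seq a1)
  also have "\<dots> = one_seq" by (simp add: cnj_blaschke_seq_mult_self Suc mult_one_left)
  finally show ?case .
qed

lemma ip_bpow_seq_mult: "x \<in> L2 \<Longrightarrow> y \<in> L2 \<Longrightarrow> ip (mult (bpow_seq a n) x) (mult (bpow_seq a n) y) = ip x y"
  by (rule ip_mult_isometry) (use a1 l1_bpow_seq cnj_bpow_seq_mult_self in auto)

lemma ip_blaschke_seq_mult: "x \<in> L2 \<Longrightarrow> y \<in> L2 \<Longrightarrow> ip (mult (blaschke_seq a) x) (mult (blaschke_seq a) y) = ip x y"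
  by (rule ip_mult_isometry) (use a1 l1_blaschke_seq cnj_blaschke_seq_mult_self in auto)

lemma H2_bpow_seq_mult: "h \<in> H2 \<Longrightarrow> mult (bpow_seq a n) h \<in> H2"
  unfolding H2_iff_causal using a1 by (auto intro: L2_mult_l1 l1_bpow_seq causal_mult causal_bpow_seq)

end

section \<open>Fourier coefficients of \<open>b\<^sub>a\<^sup>n\<close>\<close>

lemma cis_int_has_vector_derivative: assumes "k \<noteq> 0"
  shows "((\<lambda>t. cis (of_int k * t) / (\<i> * of_int k)) has_vector_derivative cis (of_int k * t)) (at t within S)"
  unfolding has_vector_derivative_def
  apply (rule has_derivative_eq_rhs)
   apply (rule derivative_eq_intros | simp)+
  using assms by (auto simp: fun_eq_iff scaleR_conv_of_real field_simps)

lemma has_integral_cis_int: "((\<lambda>t. cis (of_int k * t)) has_integral (if k = 0 then 2*pi else 0)) {0..2*pi}"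
proof (cases "k = 0")
  case True thus ?thesis using has_integral_const_real[of "1::complex" 0 "2*pi"]
    by (simp add: scaleR_conv_of_real)
next
  case False
  have "((\<lambda>t. cis (of_int k * t)) has_integral
      (cis (of_int k * (2*pi)) / (\<i> * of_int k) - cis (of_int k * 0) / (\<i> * of_int k))) {0..2*pi}"
    by (rule fundamental_theorem_of_calculus) (use cis_int_has_vector_derivative[OF False] in auto)
  moreover have "cis (of_int k * (2*pi)) = 1"
    by (simp add: cis_conv_exp exp_eq_1 mult.commute)
  ultimately show ?thesis using False by simp
qed

lemma l1_tail_le:
  assumes "l1 c" "e > 0"
  obtains S where "finite S" "n \<in> S" "(\<Sum>\<^sub>\<infinity>m\<in>UNIV - S. cmod (c m)) \<le> e"
proof -
  have cabs: "(\<lambda>m. cmod (c m)) summable_on UNIV" using assms(1) unfolding l1_def .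
  obtain S0 where S0: "finite S0" "dist (sum (\<lambda>m. cmod (c m)) S0) (l1norm c) \<le> e"
    using infsum_finite_approximation[OF cabs assms(2)] unfolding l1norm_def by auto
  define S where "S = insert n S0"
  have S: "finite S" "n \<in> S" unfolding S_def using S0 by auto
  have "l1norm c = (\<Sum>\<^sub>\<infinity>m\<in>S \<union> (UNIV - S). cmod (c m))" unfolding l1norm_def by simp
  also have "\<dots> = sum (\<lambda>m. cmod (c m)) S + (\<Sum>\<^sub>\<infinity>m\<in>UNIV - S. cmod (c m))"
    by (subst infsum_Un_disjoint) (use S summable_on_subset_banach[OF cabs] in auto)
  finally have "l1norm c = sum (\<lambda>m. cmod (c m)) S + (\<Sum>\<^sub>\<infinity>m\<in>UNIV - S. cmod (c m))" .
  moreover have "sum (\<lambda>m. cmod (c m)) S0 \<le> sum (\<lambda>m. cmod (c m)) S"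
    unfolding S_def by (rule sum_mono2) (use S0 in auto)
  moreover have "sum (\<lambda>m. cmod (c m)) S \<le> l1norm c"
    unfolding l1norm_def by (rule finite_sum_le_infsum[OF cabs]) (use S in auto)
  ultimately have "(\<Sum>\<^sub>\<infinity>m\<in>UNIV - S. cmod (c m)) \<le> e" using S0(2) unfolding dist_real_def by linarith
  thus ?thesis using S that by blast
qed

lemma has_integral_trig_sum:
  fixes c :: seq
  assumes "finite S" "n \<in> S"
  shows "((\<lambda>t. \<Sum>m\<in>S. c m * cis (of_int (m - n) * t)) has_integral (2 * pi * c n)) {0..2*pi}"
proof -
  have "((\<lambda>t. \<Sum>m\<in>S. c m * cis (of_int (m - n) * t)) has_integral
         (\<Sum>m\<in>S. c m * (if m - n = 0 then 2*pi else 0))) {0..2*pi}"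
    by (intro has_integral_sum assms has_integral_mult_right has_integral_cis_int)
  moreover have "(\<Sum>m\<in>S. c m * complex_of_real (if m - n = 0 then 2*pi else 0)) =
                 (\<Sum>m\<in>S. if m = n then c m * complex_of_real (2*pi) else 0)"
    by (intro sum.cong) auto
  ultimately show ?thesis using assms by (simp add: sum.delta' mult.commute)
qed

lemma norm_has_sum_minus_partial_le:
  assumes "l1 c" "finite S" "((\<lambda>m. c m * cis (of_int m * t)) has_sum z) UNIV"
  shows "cmod (z - (\<Sum>m\<in>S. c m * cis (of_int m * t))) \<le> (\<Sum>\<^sub>\<infinity>m\<in>UNIV - S. cmod (c m))"
proof -
  have cabs: "(\<lambda>m. cmod (c m)) summable_on UNIV" using assms(1) unfolding l1_def .
  have sm: "(\<lambda>m. c m * cis (of_int m * t)) summable_on UNIV" using assms(3) by (auto simp: summable_on_def)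
  have "z = (\<Sum>\<^sub>\<infinity>m\<in>S \<union> (UNIV - S). c m * cis (of_int m * t))" using assms(3) by (simp add: infsumI)
  also have "\<dots> = (\<Sum>m\<in>S. c m * cis (of_int m * t)) + (\<Sum>\<^sub>\<infinity>m\<in>UNIV - S. c m * cis (of_int m * t))"
    by (subst infsum_Un_disjoint) (use assms(2) summable_on_subset_banach[OF sm] in auto)
  finally have "cmod (z - (\<Sum>m\<in>S. c m * cis (of_int m * t))) =
                cmod (\<Sum>\<^sub>\<infinity>m\<in>UNIV - S. c m * cis (of_int m * t))" by simp
  also have "\<dots> \<le> (\<Sum>\<^sub>\<infinity>m\<in>UNIV - S. cmod (c m * cis (of_int m * t)))"
    by (rule norm_infsum_bound) (use summable_on_subset_banach[OF cabs] in \<open>simp add: norm_mult\<close>)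
  also have "\<dots> = (\<Sum>\<^sub>\<infinity>m\<in>UNIV - S. cmod (c m))" by (simp add: norm_mult)
  finally show ?thesis .
qed

text \<open>An absolutely convergent Fourier series is the Fourier series of its sum: compare
  \<open>\<integral> F(e\<^sup>i\<^sup>t) e\<^sup>-\<^sup>i\<^sup>n\<^sup>t\<close> with the integral of a partial sum whose tail is at most \<open>\<epsilon>\<close> in \<open>\<ell>\<^sup>1\<close>.\<close>
lemma fourier_coeff_eqI:
  fixes F :: "complex \<Rightarrow> complex" and c :: seq
  assumes c: "l1 c"
    and hs: "\<And>t. ((\<lambda>m. c m * cis (of_int m * t)) has_sum F (cis t)) UNIV"
    and cont: "continuous_on {0..2*pi} (\<lambda>t. F (cis t))"
  shows "fourier_coeff F n = c n"
proof -
  define G where "G t = F (cis t) * cis (- (of_int n * t))" for t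
  define I where "I = integral {0..2*pi} G"
  have Gi: "(G has_integral I) {0..2*pi}"
    unfolding G_def I_def
    by (intro integrable_integral integrable_continuous_real continuous_intros cont)
  have "cmod (I - 2 * pi * c n) \<le> 0 + e" if e: "e > 0" for e
  proof -
    obtain S where S: "finite S" "n \<in> S" and tail: "(\<Sum>\<^sub>\<infinity>m\<in>UNIV - S. cmod (c m)) \<le> e / (2 * pi)"
      using l1_tail_le[OF c, of "e / (2 * pi)" n] e by auto
    define P where "P t = (\<Sum>m\<in>S. c m * cis (of_int (m - n) * t))" for t
    have bound: "cmod (G t - P t) \<le> e / (2 * pi)" for t
    proof -
      have shift: "c m * cis (of_int (m - n) * t) = c m * cis (of_int m * t) * cis (- (of_int n * t))" for m
        by (simp add: cis_mult algebra_simps)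
      have "G t - P t = (F (cis t) - (\<Sum>m\<in>S. c m * cis (of_int m * t))) * cis (- (of_int n * t))"
        unfolding G_def P_def shift by (simp add: left_diff_distrib sum_distrib_right)
      thus ?thesis using order_trans[OF norm_has_sum_minus_partial_le[OF c S(1) hs] tail]
        by (simp add: norm_mult)
    qed
    have hi: "((\<lambda>t. G t - P t) has_integral (I - 2 * pi * c n)) (cbox 0 (2*pi))"
      unfolding P_def cbox_interval by (intro has_integral_diff Gi has_integral_trig_sum S)
    have "cmod (I - 2 * pi * c n) \<le> e / (2 * pi) * (2 * pi)"
      using has_integral_bound[OF _ hi, of "e / (2 * pi)"] e bound by (simp add: cbox_interval)
    thus ?thesis by simp
  qed
  hence "I = 2 * pi * c n" using field_le_epsilon[of "cmod (I - 2 * pi * c n)" 0] by simp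
  thus ?thesis unfolding fourier_coeff_def I_def G_def by simp
qed

lemma has_sum_mult_fourier:
  assumes f: "l1 f" and g: "l1 g"
    and A: "((\<lambda>m. f m * cis (of_int m * t)) has_sum A) UNIV"
    and B: "((\<lambda>m. g m * cis (of_int m * t)) has_sum B) UNIV"
  shows "((\<lambda>m. mult f g m * cis (of_int m * t)) has_sum (A * B)) UNIV"
proof -
  define P where "P = (\<lambda>(i,j). f i * cis (of_int i * t) * (g j * cis (of_int j * t)))"
  have Pabs: "(\<lambda>p. norm (P p)) summable_on UNIV"
    using summable_on_tensor_abs[OF f g] unfolding P_def by (simp add: case_prod_unfold norm_mult)
  have Ps: "P summable_on UNIV" by (rule abs_summable_summable[OF Pabs])
  define Q where "Q = (\<lambda>(n,i). f i * g (n - i) * cis (of_int n * t))"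
  have PQ: "Q = (\<lambda>p. P ((\<lambda>(n,i). (i, n - i)) p))"
    unfolding P_def Q_def by (auto simp: fun_eq_iff cis_mult algebra_simps)
  have Qs: "Q summable_on UNIV" unfolding PQ using summable_on_reindex_bij_betw[OF bij_betw_conv_index, of P] Ps by simp
  have QP: "infsum Q UNIV = infsum P UNIV" unfolding PQ by (rule infsum_reindex_bij_betw[OF bij_betw_conv_index])
  have "A * B = (\<Sum>\<^sub>\<infinity>i. f i * cis (of_int i * t)) * (\<Sum>\<^sub>\<infinity>j. g j * cis (of_int j * t))"
    using A B by (simp add: infsumI)
  also have "\<dots> = (\<Sum>\<^sub>\<infinity>i. f i * cis (of_int i * t) * (\<Sum>\<^sub>\<infinity>j. g j * cis (of_int j * t)))"
    by (rule infsum_cmult_left'[symmetric])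
  also have "\<dots> = (\<Sum>\<^sub>\<infinity>i. \<Sum>\<^sub>\<infinity>j. P (i, j))"
    by (intro infsum_cong) (simp add: P_def infsum_cmult_right')
  also have "\<dots> = infsum P UNIV" using infsum_Sigma_banach[of P UNIV "\<lambda>_. UNIV"] Ps by simp
  also have "\<dots> = infsum Q UNIV" by (rule QP[symmetric])
  also have "\<dots> = (\<Sum>\<^sub>\<infinity>n. \<Sum>\<^sub>\<infinity>i. Q (n, i))" using infsum_Sigma_banach[of Q UNIV "\<lambda>_. UNIV"] Qs by simp
  also have "\<dots> = (\<Sum>\<^sub>\<infinity>n. mult f g n * cis (of_int n * t))"
    unfolding Q_def mult_def by (simp add: infsum_cmult_left')
  finally have eq: "A * B = (\<Sum>\<^sub>\<infinity>n. mult f g n * cis (of_int n * t))" .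
  have "(\<lambda>n. norm (mult f g n * cis (of_int n * t))) summable_on UNIV"
    using l1_mult[OF f g] unfolding l1_def by (simp add: norm_mult)
  hence "(\<lambda>n. mult f g n * cis (of_int n * t)) summable_on UNIV"
    by (rule abs_summable_summable)
  thus ?thesis using eq by (simp add: has_sum_infsum)
qed

lemma affine_seq_has_sum: "((\<lambda>m. affine_seq p q m * cis (of_int m * t)) has_sum (p + q * cis t)) UNIV"
proof -
  have "((\<lambda>m. affine_seq p q m * cis (of_int m * t)) has_sum (\<Sum>m\<in>{0,1}. affine_seq p q m * cis (of_int m * t))) {0,1}"
    by (rule has_sum_finite) simp
  hence "((\<lambda>m. affine_seq p q m * cis (of_int m * t)) has_sum (p + q * cis t)) {0,1}" by (simp add: affine_seq_def)
  thus ?thesis by (rule has_sum_cong_neutral[THEN iffD1, rotated -1]) (auto simp: affine_seq_def)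
qed

context
  fixes a :: complex
  assumes a1: "cmod a < 1"
begin

lemma kernel_seq_has_sum: "((\<lambda>m. kernel_seq a m * cis (of_int m * t)) has_sum (1 / (1 - cnj a * cis t))) UNIV"
proof -
  have "norm (cnj a * cis t) < 1" using a1 by (simp add: norm_mult)
  from has_sum_geometric_int[OF this]
  show ?thesis
  proof (rule has_sum_cong[THEN iffD1, rotated])
    fix m :: int
    show "(if m < 0 then 0 else (cnj a * cis t) ^ nat m) = kernel_seq a m * cis (of_int m * t)"
    proof (cases "m < 0")
      case True thus ?thesis by (simp add: kernel_seq_def)
    next
      case False
      have "cis t ^ nat m = cis (real (nat m) * t)" by (rule Complex.DeMoivre)
      also have "real (nat m) = of_int m" using False by simp
      finally show ?thesis using False by (simp add: kernel_seq_def power_mult_distrib)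
    qed
  qed
qed

lemma blaschke_denominator_nonzero: "1 - cnj a * cis t \<noteq> 0"
proof
  assume "1 - cnj a * cis t = 0"
  hence "cmod (cnj a * cis t) = 1" by (metis eq_iff_diff_eq_0 norm_one)
  thus False using a1 by (simp add: norm_mult)
qed

lemma bpow_seq_has_sum: "((\<lambda>m. bpow_seq a n m * cis (of_int m * t)) has_sum (blaschke a (cis t) ^ n)) UNIV"
proof (induction n)
  case 0
  have "((\<lambda>m. affine_seq 1 0 m * cis (of_int m * t)) has_sum 1) UNIV" using affine_seq_has_sum[of 1 0 t] by simp
  moreover have "affine_seq 1 0 = one_seq" by (auto simp: affine_seq_def one_seq_def)
  ultimately show ?case by simp
next
  case (Suc n)
  have "((\<lambda>m. blaschke_seq a m * cis (of_int m * t)) has_sum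
          ((- a + 1 * cis t) * (1 / (1 - cnj a * cis t)))) UNIV"
    unfolding blaschke_seq_def
    by (intro has_sum_mult_fourier l1_affine_seq l1_kernel_seq a1 affine_seq_has_sum kernel_seq_has_sum)
  hence b: "((\<lambda>m. blaschke_seq a m * cis (of_int m * t)) has_sum (blaschke a (cis t))) UNIV"
    by (simp add: blaschke_def)
  show ?case by (simp, rule has_sum_mult_fourier[OF l1_blaschke_seq[OF a1] l1_bpow_seq[OF a1] b Suc])
qed

lemma bpow_eq_bpow_seq: "bpow a n = bpow_seq a n"
proof
  fix m
  show "bpow a n m = bpow_seq a n m"
    unfolding bpow_def
  proof (rule fourier_coeff_eqI[OF l1_bpow_seq[OF a1] bpow_seq_has_sum])
    show "continuous_on {0..2 * pi} (\<lambda>t. blaschke a (cis t) ^ n)"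
      unfolding blaschke_def by (intro continuous_intros) (use blaschke_denominator_nonzero in auto)
  qed
qed

end

section \<open>The Takenaka--Malmquist basis\<close>

text \<open>\<open>nkernel a = k\<^sub>a / \<parallel>k\<^sub>a\<parallel>\<close> (as \<open>\<parallel>k\<^sub>a\<parallel>\<^sup>-\<^sup>2 = 1 - |a|\<^sup>2\<close>) and \<open>tm a k = e\<^sub>k = b\<^sub>a\<^sup>k k\<^sub>a / \<parallel>k\<^sub>a\<parallel>\<close>.\<close>

definition nkernel :: "complex \<Rightarrow> seq" where
  "nkernel a = (\<lambda>n. complex_of_real (sqrt (1 - (cmod a)\<^sup>2)) * kernel_seq a n)"
definition tm :: "complex \<Rightarrow> nat \<Rightarrow> seq" where
  "tm a k = mult (bpow_seq a k) (nkernel a)"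
definition tm_comb :: "complex \<Rightarrow> nat \<Rightarrow> (nat \<Rightarrow> complex) \<Rightarrow> seq" where
  "tm_comb a n c = (\<lambda>m. \<Sum>k<n. c k * tm a k m)"

lemma causal_nkernel: "causal (nkernel a)" unfolding causal_def nkernel_def kernel_seq_def by auto

lemma causal_tm: "causal (tm a k)" unfolding tm_def by (intro causal_mult causal_bpow_seq causal_nkernel)

lemma tm_comb_cong: "(\<And>k. k < n \<Longrightarrow> c k = d k) \<Longrightarrow> tm_comb a n c = tm_comb a n d"
  unfolding tm_comb_def by (intro ext sum.cong) auto

lemma tm_comb_lincomb: "(\<lambda>m. x * tm_comb a n c m + tm_comb a n d m) = tm_comb a n (\<lambda>k. x * c k + d k)"
  unfolding tm_comb_def by (simp add: sum_distrib_left sum.distrib algebra_simps)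

lemma tm_comb_zero: "tm_comb a n (\<lambda>k. 0) = (\<lambda>m. 0)" unfolding tm_comb_def by simp

lemma tm_comb_0: "tm_comb a 0 c = (\<lambda>m. 0)" unfolding tm_comb_def by simp

lemma tm_comb_Suc: "tm_comb a (Suc n) c = (\<lambda>m. c n * tm a n m + tm_comb a n c m)"
  unfolding tm_comb_def by (simp add: add.commute)

lemma tm_comb_indicator: assumes "k < n" shows "tm_comb a n (\<lambda>i. if i = k then 1 else 0) = tm a k"
proof
  fix m
  have "(\<Sum>i<n. (if i = k then 1 else 0) * tm a i m) = (\<Sum>i<n. if i = k then tm a i m else 0)"
    by (intro sum.cong) auto
  thus "tm_comb a n (\<lambda>i. if i = k then 1 else 0) m = tm a k m" unfolding tm_comb_def using assms by simp
qed

lemma conjC_conj_z: "conjC \<theta> f = mult \<theta> (conj_z f)" unfolding conjC_def conj_z_def by simp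

lemma sum_matrix_adjoint:
  fixes M :: "nat \<Rightarrow> nat \<Rightarrow> complex"
  shows "(\<Sum>j<n. (\<Sum>k<n. M j k * c k) * cnj (d j)) = (\<Sum>k<n. c k * cnj (\<Sum>j<n. cnj (M j k) * d j))"
proof -
  have "(\<Sum>j<n. (\<Sum>k<n. M j k * c k) * cnj (d j)) = (\<Sum>j<n. \<Sum>k<n. M j k * c k * cnj (d j))"
    by (simp add: sum_distrib_right)
  also have "\<dots> = (\<Sum>k<n. \<Sum>j<n. M j k * c k * cnj (d j))" by (rule sum.swap)
  also have "\<dots> = (\<Sum>k<n. c k * cnj (\<Sum>j<n. cnj (M j k) * d j))"
    by (simp add: sum_distrib_left mult_ac)
  finally show ?thesis .
qed

lemma sum_lessThan_mult_eq_all_iff: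
  fixes X Y :: "nat \<Rightarrow> nat \<Rightarrow> complex"
  shows "(\<forall>d. \<forall>i<n. (\<Sum>k<n. X i k * d k) = (\<Sum>k<n. Y i k * d k)) \<longleftrightarrow> (\<forall>i<n. \<forall>k<n. X i k = Y i k)"
proof
  assume h: "\<forall>d. \<forall>i<n. (\<Sum>k<n. X i k * d k) = (\<Sum>k<n. Y i k * d k)"
  show "\<forall>i<n. \<forall>k<n. X i k = Y i k"
  proof (intro allI impI)
    fix i k assume "i < n" "k < n"
    thus "X i k = Y i k"
      using spec[OF h, of "\<lambda>j. if j = k then 1 else 0"] by (simp add: if_distrib cong: if_cong)
  qed
qed (auto intro!: sum.cong)

context
  fixes a :: complex
  assumes a1: "cmod a < 1"
begin

lemma l1_nkernel: "l1 (nkernel a)" unfolding nkernel_def by (intro l1_scale l1_kernel_seq a1)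

lemma l1_tm: "l1 (tm a k)" unfolding tm_def by (intro l1_mult l1_bpow_seq l1_nkernel a1)

lemma L2_nkernel: "nkernel a \<in> L2" using l1_L2 l1_nkernel by auto

lemma H2_tm: "tm a k \<in> H2"
  unfolding H2_iff_causal using a1 by (auto intro: l1_L2 l1_tm causal_tm)

lemma L2_tm: "tm a k \<in> L2" using H2_tm unfolding H2_iff_causal by auto

lemma ip_blaschke_seq_mult_kernel_seq: assumes "h \<in> H2" shows "ip (mult (blaschke_seq a) h) (kernel_seq a) = 0"
proof -
  have "ip (mult (blaschke_seq a) h) (kernel_seq a) = ip h (mult (cnj_seq (blaschke_seq a)) (kernel_seq a))"
    by (rule ip_mult_left) (use assms a1 l1_blaschke_seq L2_kernel_seq[OF a1] in \<open>auto simp: H2_iff_causal\<close>)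
  also have "\<dots> = ip h (pole_seq a)" by (simp add: cnj_blaschke_seq_kernel_seq a1)
  also have "\<dots> = 0" unfolding ip_def
  proof -
    have "(\<lambda>n. h n * cnj (pole_seq a n)) = (\<lambda>n. 0)"
      using assms unfolding H2_iff_causal causal_def pole_seq_alt by (auto simp: fun_eq_iff)
    thus "(\<Sum>\<^sub>\<infinity>n. h n * cnj (pole_seq a n)) = 0" by simp
  qed
  finally show ?thesis .
qed

lemma ip_nkernel: "ip x (nkernel a) = complex_of_real (sqrt (1 - (cmod a)\<^sup>2)) * ip x (kernel_seq a)"
  unfolding nkernel_def ip_scale_right by simp

lemma ip_nkernel_self: "ip (nkernel a) (nkernel a) = 1"
proof -
  define r where "r = (cmod a)\<^sup>2"
  have r: "0 \<le> r" "r < 1" unfolding r_def using a1 by (auto simp: abs_square_less_1)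
  have "((\<lambda>n::int. if n < 0 then 0 else r ^ nat n) has_sum (1 / (1 - r))) UNIV"
    by (rule has_sum_geometric_int) (use r in auto)
  hence "((\<lambda>n::int. (1 - r) * (if n < 0 then 0 else r ^ nat n)) has_sum ((1 - r) * (1 / (1 - r)))) UNIV"
    by (rule has_sum_cmult_right)
  moreover have "(\<lambda>n::int. (1 - r) * (if n < 0 then 0 else r ^ nat n)) = (\<lambda>n. (cmod (nkernel a n))\<^sup>2)"
  proof
    fix n :: int
    have "(cmod (nkernel a n))\<^sup>2 = (1 - r) * (cmod (kernel_seq a n))\<^sup>2"
      unfolding nkernel_def r_def using r unfolding r_def
      by (simp add: norm_mult power_mult_distrib)
    also have "(cmod (kernel_seq a n))\<^sup>2 = (if n < 0 then 0 else r ^ nat n)"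
      unfolding kernel_seq_def r_def by (simp add: norm_power power_mult[symmetric] mult.commute)
    finally show "(1 - r) * (if n < 0 then 0 else r ^ nat n) = (cmod (nkernel a n))\<^sup>2" by simp
  qed
  ultimately have "l2norm_sq (nkernel a) = 1" unfolding l2norm_sq_def using r by (simp add: infsumI)
  thus ?thesis using ip_self[OF L2_nkernel] by simp
qed

lemma tm_0: "tm a 0 = nkernel a" unfolding tm_def by (simp add: mult_one_left)

lemma tm_Suc: "tm a (Suc k) = mult (blaschke_seq a) (tm a k)"
  unfolding tm_def
  by (simp, rule mult_assoc) (use a1 l1_blaschke_seq l1_bpow_seq l1_nkernel l1_bounded_seq in auto)

lemma tm_add: "tm a (m + k) = mult (bpow_seq a m) (tm a k)"
  unfolding tm_def
  by (simp add: bpow_seq_add[OF a1], rule mult_assoc) (use a1 l1_blaschke_seq l1_bpow_seq l1_nkernel l1_bounded_seq in auto)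

lemma ip_blaschke_seq_mult_nkernel: "x \<in> H2 \<Longrightarrow> ip (mult (blaschke_seq a) x) (nkernel a) = 0"
  by (simp add: ip_nkernel ip_blaschke_seq_mult_kernel_seq)

lemma ip_tm_tm0: "ip (tm a d) (tm a 0) = (if d = 0 then 1 else 0)"
proof (cases d)
  case 0 thus ?thesis by (simp add: tm_0 ip_nkernel_self)
next
  case (Suc d')
  thus ?thesis by (simp add: tm_Suc tm_0 ip_blaschke_seq_mult_nkernel H2_tm)
qed

lemma ip_tm_tm: "ip (tm a k) (tm a j) = (if k = j then 1 else 0)"
proof -
  have ge: "ip (tm a k) (tm a j) = (if k = j then 1 else 0)" if "j \<le> k" for j k
  proof -
    obtain d where d: "k = j + d" using \<open>j \<le> k\<close> le_Suc_ex by blast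
    have "ip (tm a k) (tm a j) = ip (mult (bpow_seq a j) (tm a d)) (mult (bpow_seq a j) (tm a 0))"
      using tm_add[of j d] tm_add[of j 0] d by simp
    also have "\<dots> = ip (tm a d) (tm a 0)" by (intro ip_bpow_seq_mult[OF a1] L2_tm)
    finally show ?thesis using ip_tm_tm0 d by simp
  qed
  show ?thesis
  proof (cases "j \<le> k")
    case True thus ?thesis using ge by simp
  next
    case False
    hence "ip (tm a j) (tm a k) = 0" using ge[of k j] by simp
    thus ?thesis using False by (subst ip_cnj) simp
  qed
qed

lemma ip_tm_bpow_seq_mult: assumes "k < n" "h \<in> H2" shows "ip (tm a k) (mult (bpow_seq a n) h) = 0"
proof -
  obtain d where d: "n = k + Suc d" using less_imp_Suc_add[OF assms(1)] by auto
  have "mult (bpow_seq a n) h = mult (bpow_seq a k) (mult (bpow_seq a (Suc d)) h)"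
    unfolding d bpow_seq_add[OF a1]
    by (rule mult_assoc) (use a1 l1_bpow_seq[of a "Suc d"] l1_bpow_seq[of a k] assms(2) L2_bounded_seq in \<open>auto simp: H2_iff_causal simp del: bpow_seq.simps\<close>)
  hence "ip (tm a k) (mult (bpow_seq a n) h) = ip (mult (bpow_seq a k) (tm a 0)) (mult (bpow_seq a k) (mult (bpow_seq a (Suc d)) h))"
    using tm_add[of k 0] by simp
  also have "\<dots> = ip (nkernel a) (mult (bpow_seq a (Suc d)) h)"
  proof -
    have m: "mult (bpow_seq a (Suc d)) h \<in> L2" using H2_bpow_seq_mult[OF a1 assms(2)] H2_iff_causal by blast
    show ?thesis using ip_bpow_seq_mult[OF a1 L2_tm[of 0] m, where n=k] by (simp add: tm_0 del: bpow_seq.simps)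
  qed
  also have "\<dots> = cnj (ip (mult (blaschke_seq a) (mult (bpow_seq a d) h)) (nkernel a))"
  proof -
    have "mult (bpow_seq a (Suc d)) h = mult (blaschke_seq a) (mult (bpow_seq a d) h)"
      by (simp, rule mult_assoc) (use a1 l1_bpow_seq l1_blaschke_seq assms(2) L2_bounded_seq l1_mult in \<open>auto simp: H2_iff_causal\<close>)
    thus ?thesis by (subst ip_cnj) simp
  qed
  also have "\<dots> = 0" using ip_blaschke_seq_mult_nkernel H2_bpow_seq_mult[OF a1] assms(2) by simp
  finally show ?thesis .
qed

lemma mult_pole_seq_H2: assumes "g \<in> H2" "m < 0" shows "mult (pole_seq a) g m = a ^ nat (- m - 1) * ip g (kernel_seq a)"
proof -
  have t: "pole_seq a k * g (m - k) = a ^ nat (- m - 1) * (g (m - k) * cnj (kernel_seq a (m - k)))" for k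
  proof (cases "m - k < 0")
    case True thus ?thesis using assms unfolding H2_iff_causal causal_def by simp
  next
    case False
    hence "k < 0" "nat (- k - 1) = nat (- m - 1) + nat (m - k)" using assms(2) by auto
    thus ?thesis using False unfolding pole_seq_alt kernel_seq_def by (simp add: power_add)
  qed
  have "mult (pole_seq a) g m = (\<Sum>\<^sub>\<infinity>k. a ^ nat (- m - 1) * (g (m - k) * cnj (kernel_seq a (m - k))))"
    unfolding mult_def by (simp add: t)
  also have "\<dots> = a ^ nat (- m - 1) * (\<Sum>\<^sub>\<infinity>k. g (m - k) * cnj (kernel_seq a (m - k)))"
    by (rule infsum_cmult_right')
  also have "(\<Sum>\<^sub>\<infinity>k. g (m - k) * cnj (kernel_seq a (m - k))) = ip g (kernel_seq a)"
    unfolding ip_def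
    by (rule infsum_reindex_bij_witness[where i="\<lambda>k. m - k" and j="\<lambda>k. m - k"]) auto
  finally show ?thesis .
qed

text \<open>\<open>g \<perp> k\<^sub>a\<close> means \<open>g(a) = 0\<close>, so \<open>g / b\<^sub>a = g conj b\<^sub>a\<close> is again analytic.\<close>
lemma H2_blaschke_seq_divide: assumes "g \<in> H2" "ip g (kernel_seq a) = 0"
  shows "mult (cnj_seq (blaschke_seq a)) g \<in> H2" "mult (blaschke_seq a) (mult (cnj_seq (blaschke_seq a)) g) = g"
proof -
  have gL: "g \<in> L2" using assms(1) H2_iff_causal by auto
  show "mult (blaschke_seq a) (mult (cnj_seq (blaschke_seq a)) g) = g"
    by (subst mult_assoc[symmetric]) (use a1 l1_blaschke_seq l1_cnj_seq gL L2_bounded_seq blaschke_seq_mult_cnj_self mult_one_left in auto)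
  have causal_quot: "causal (mult (cnj_seq (blaschke_seq a)) g)" unfolding causal_def
  proof (intro allI impI)
    fix m :: int assume m: "m < 0"
    have "mult (cnj_seq (blaschke_seq a)) g = mult (affine_seq 1 (- cnj a)) (mult (pole_seq a) g)"
      unfolding cnj_blaschke_seq
      by (rule mult_assoc) (use a1 l1_affine_seq l1_pole_seq gL L2_bounded_seq in auto)
    hence "mult (cnj_seq (blaschke_seq a)) g m = mult (pole_seq a) g m - cnj a * mult (pole_seq a) g (m - 1)"
      by (simp add: mult_affine_seq)
    also have "\<dots> = 0" using m by (simp add: mult_pole_seq_H2 assms)
    finally show "mult (cnj_seq (blaschke_seq a)) g m = 0" .
  qed
  show "mult (cnj_seq (blaschke_seq a)) g \<in> H2" unfolding H2_iff_causal
    using causal_quot L2_mult_l1[OF l1_cnj_seq[OF l1_blaschke_seq[OF a1]] gL] by simp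
qed

lemma H2_bpow_seq_divide: "g \<in> H2 \<Longrightarrow> (\<forall>k<n. ip g (tm a k) = 0) \<Longrightarrow> \<exists>h\<in>H2. g = mult (bpow_seq a n) h"
proof (induction n arbitrary: g)
  case 0 thus ?case by (auto simp: mult_one_left)
next
  case (Suc n)
  have "ip g (tm a 0) = 0" using Suc.prems by simp
  hence "ip g (kernel_seq a) = 0" using ip_nkernel a1 abs_square_less_1[of "cmod a"] by (simp add: tm_0)
  note d = H2_blaschke_seq_divide[OF Suc.prems(1) this]
  define g1 where "g1 = mult (cnj_seq (blaschke_seq a)) g"
  have g1: "g1 \<in> H2" "g = mult (blaschke_seq a) g1" using d unfolding g1_def by auto
  have "\<forall>k<n. ip g1 (tm a k) = 0"
  proof (intro allI impI)
    fix k assume "k < n"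
    have "ip g1 (tm a k) = ip (mult (blaschke_seq a) g1) (mult (blaschke_seq a) (tm a k))"
      by (rule ip_blaschke_seq_mult[OF a1, symmetric]) (use g1 L2_tm in \<open>auto simp: H2_iff_causal\<close>)
    also have "\<dots> = ip g (tm a (Suc k))" by (simp add: tm_Suc g1(2)[symmetric])
    also have "\<dots> = 0" using Suc.prems \<open>k < n\<close> by simp
    finally show "ip g1 (tm a k) = 0" .
  qed
  then obtain h where h: "h \<in> H2" "g1 = mult (bpow_seq a n) h" using Suc.IH g1(1) by blast
  have "g = mult (mult (blaschke_seq a) (bpow_seq a n)) h"
    unfolding g1(2) h(2)
    by (rule mult_assoc[symmetric]) (use a1 l1_blaschke_seq l1_bpow_seq h L2_bounded_seq in \<open>auto simp: H2_iff_causal\<close>)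
  thus ?case using h by auto
qed

lemma L2_tm_comb: "tm_comb a n c \<in> L2" unfolding tm_comb_def by (intro L2_sum L2_tm) auto

lemma H2_tm_comb: "tm_comb a n c \<in> H2"
  unfolding H2_iff_causal using L2_tm_comb unfolding causal_def tm_comb_def
  using causal_tm[of a] unfolding causal_def by simp

lemma ip_tm_comb_tm: "ip (tm_comb a n c) (tm a j) = (if j < n then c j else 0)"
proof -
  have "ip (tm_comb a n c) (tm a j) = (\<Sum>k<n. c k * ip (tm a k) (tm a j))"
    unfolding tm_comb_def by (intro ip_sum_left L2_tm) auto
  also have "\<dots> = (\<Sum>k<n. if k = j then c k else 0)" by (intro sum.cong) (auto simp: ip_tm_tm)
  also have "\<dots> = (if j < n then c j else 0)" by (simp add: sum.delta)
  finally show ?thesis .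
qed

lemma ip_tm_comb_tm_comb: "ip (tm_comb a n c) (tm_comb a n d) = (\<Sum>k<n. c k * cnj (d k))"
proof -
  have "ip (tm_comb a n c) (tm_comb a n d) = (\<Sum>k<n. cnj (d k) * ip (tm_comb a n c) (tm a k))"
    unfolding tm_comb_def[of a n d] by (intro ip_sum_right L2_tm L2_tm_comb) auto
  thus ?thesis by (simp add: ip_tm_comb_tm mult.commute)
qed

lemma ip_tm_comb_bpow_seq_mult: assumes "n \<le> N" "h \<in> H2" shows "ip (tm_comb a n c) (mult (bpow_seq a N) h) = 0"
proof -
  have "ip (tm_comb a n c) (mult (bpow_seq a N) h) = (\<Sum>k<n. c k * ip (tm a k) (mult (bpow_seq a N) h))"
    unfolding tm_comb_def by (intro ip_sum_left L2_tm) (use H2_bpow_seq_mult[OF a1] assms(2) in \<open>auto simp: H2_iff_causal\<close>)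
  also have "\<dots> = 0" using assms by (simp add: ip_tm_bpow_seq_mult)
  finally show ?thesis .
qed

lemma tm_comb_K2: "n \<le> N \<Longrightarrow> tm_comb a n c \<in> K2 (bpow_seq a N)"
  unfolding K2_def using H2_tm_comb ip_tm_comb_bpow_seq_mult by auto

lemma K2_tm_expansion: assumes "f \<in> K2 (bpow_seq a n)" shows "f = tm_comb a n (\<lambda>k. ip f (tm a k))"
proof -
  define c where "c = (\<lambda>k. ip f (tm a k))"
  define g where "g = (\<lambda>m. f m - tm_comb a n c m)"
  have fH: "f \<in> H2" and fp: "\<And>h. h \<in> H2 \<Longrightarrow> ip f (mult (bpow_seq a n) h) = 0"
    using assms unfolding K2_def by auto
  have fL: "f \<in> L2" using fH H2_iff_causal by auto
  have gL: "g \<in> L2" unfolding g_def by (intro L2_diff fL L2_tm_comb)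
  have gH: "g \<in> H2" unfolding H2_iff_causal using gL fH H2_tm_comb unfolding H2_iff_causal causal_def g_def by auto
  have ipg: "ip g z = ip f z - ip (tm_comb a n c) z" if "z \<in> L2" for z
    unfolding g_def using ip_lincomb_left[of "tm_comb a n c" f z "-1"] L2_tm_comb fL that by simp
  have "\<forall>k<n. ip g (tm a k) = 0"
    by (auto simp: ipg L2_tm ip_tm_comb_tm c_def)
  then obtain h where h: "h \<in> H2" "g = mult (bpow_seq a n) h" using H2_bpow_seq_divide gH by blast
  have "ip g g = 0"
  proof -
    have "ip g g = ip f (mult (bpow_seq a n) h) - ip (tm_comb a n c) (mult (bpow_seq a n) h)"
      using h ipg gL by simp
    also have "\<dots> = 0" using fp h(1) ip_tm_comb_bpow_seq_mult[of n n h c] by simp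
    finally show ?thesis .
  qed
  hence "g = (\<lambda>m. 0)" by (rule ip_self_eq_0D[OF gL])
  thus ?thesis unfolding g_def c_def by (auto simp: fun_eq_iff)
qed

lemma tm_K2: assumes "k < n" shows "tm a k \<in> K2 (bpow_seq a n)"
proof -
  have "tm_comb a n (\<lambda>i. if i = k then 1 else 0) \<in> K2 (bpow_seq a n)" by (rule tm_comb_K2) simp
  thus ?thesis using tm_comb_indicator[OF assms] by simp
qed

lemma tm_comb_inj: assumes "tm_comb a n c = tm_comb a n d" "k < n" shows "c k = d k"
  using ip_tm_comb_tm[of n c k] ip_tm_comb_tm[of n d k] assms by simp

lemma tm_comb_eq_iff: "tm_comb a n c = tm_comb a n d \<longleftrightarrow> (\<forall>k<n. c k = d k)"
  using tm_comb_inj tm_comb_cong by blast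

lemma K2_iff_tm_comb: "f \<in> K2 (bpow_seq a n) \<longleftrightarrow> (\<exists>c. f = tm_comb a n c)"
  using K2_tm_expansion tm_comb_K2 by blast

lemma l2norm_sq_tm_comb: "l2norm_sq (tm_comb a n c) = (\<Sum>k<n. (cmod (c k))\<^sup>2)"
proof -
  have "complex_of_real (l2norm_sq (tm_comb a n c)) = ip (tm_comb a n c) (tm_comb a n c)"
    by (rule ip_self[OF L2_tm_comb, symmetric])
  also have "\<dots> = (\<Sum>k<n. c k * cnj (c k))" by (rule ip_tm_comb_tm_comb)
  also have "\<dots> = complex_of_real (\<Sum>k<n. (cmod (c k))\<^sup>2)"
    by (simp only: of_real_sum complex_norm_square)
  finally show ?thesis using of_real_eq_iff by blast
qed

lemma K2_eq_tm_combI: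
  assumes "g \<in> K2 (bpow_seq a n)" "\<And>k. k < n \<Longrightarrow> ip g (tm a k) = c k"
  shows "g = tm_comb a n c"
proof -
  have "g = tm_comb a n (\<lambda>k. ip g (tm a k))" by (rule K2_tm_expansion[OF assms(1)])
  also have "\<dots> = tm_comb a n c" by (rule tm_comb_cong) (rule assms(2))
  finally show ?thesis .
qed

lemma proj_K2_tm: assumes "x \<in> L2"
  shows "proj (K2 (bpow_seq a n)) x = tm_comb a n (\<lambda>k. ip x (tm a k))"
proof -
  let ?S = "K2 (bpow_seq a n)"
  have perp: "ip (\<lambda>m. x m - g m) h = 0"
    if g: "g \<in> ?S" and gc: "\<And>k. k < n \<Longrightarrow> ip g (tm a k) = ip x (tm a k)" and h: "h \<in> ?S" for g h
  proof -
    obtain d where d: "h = tm_comb a n d" using h K2_iff_tm_comb by blast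
    have gL: "g \<in> L2" using g by (rule L2_if_K2)
    have "ip (\<lambda>m. x m - g m) h = (\<Sum>k<n. cnj (d k) * ip (\<lambda>m. x m - g m) (tm a k))"
      unfolding d tm_comb_def by (intro ip_sum_right L2_tm L2_diff assms gL) auto
    also have "\<dots> = 0" by (intro sum.neutral) (simp add: ip_diff assms gL L2_tm gc)
    finally show ?thesis .
  qed
  have "\<exists>g. g \<in> ?S \<and> (\<forall>h\<in>?S. ip (\<lambda>m. x m - g m) h = 0)"
    using tm_comb_K2[of n n "\<lambda>k. ip x (tm a k)"]
    by (intro exI[of _ "tm_comb a n (\<lambda>k. ip x (tm a k))"] conjI ballI perp) (auto simp: ip_tm_comb_tm)
  from someI_ex[OF this]
  have g: "proj ?S x \<in> ?S" "\<forall>h\<in>?S. ip (\<lambda>m. x m - proj ?S x m) h = 0"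
    unfolding proj_def by auto
  show ?thesis
  proof (rule K2_eq_tm_combI[OF g(1)])
    fix k assume "k < n"
    hence "ip (\<lambda>m. x m - proj ?S x m) (tm a k) = 0" using g(2) tm_K2 by blast
    thus "ip (proj ?S x) (tm a k) = ip x (tm a k)"
      by (simp add: ip_diff assms L2_if_K2[OF g(1)] L2_tm)
  qed
qed

lemma adjoint_on_K2_tm:
  assumes T: "\<And>c. T (tm_comb a n c) = tm_comb a n (\<lambda>j. \<Sum>k<n. M j k * c k)"
    and f: "f = tm_comb a n d"
  shows "adjoint_on (K2 (bpow_seq a n)) T f = tm_comb a n (\<lambda>k. \<Sum>j<n. cnj (M j k) * d j)"
proof -
  let ?S = "K2 (bpow_seq a n)"
  have "\<exists>h. h \<in> ?S \<and> (\<forall>g\<in>?S. ip (T g) f = ip g h)"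
  proof (intro exI conjI ballI)
    show "tm_comb a n (\<lambda>k. \<Sum>j<n. cnj (M j k) * d j) \<in> ?S" by (rule tm_comb_K2) simp
    fix g assume "g \<in> ?S"
    then obtain c where c: "g = tm_comb a n c" using K2_iff_tm_comb by blast
    show "ip (T g) f = ip g (tm_comb a n (\<lambda>k. \<Sum>j<n. cnj (M j k) * d j))"
      unfolding c T f ip_tm_comb_tm_comb by (rule sum_matrix_adjoint)
  qed
  from someI_ex[OF this]
  have h: "adjoint_on ?S T f \<in> ?S" "\<forall>g\<in>?S. ip (T g) f = ip g (adjoint_on ?S T f)"
    unfolding adjoint_on_def by auto
  show ?thesis
  proof (rule K2_eq_tm_combI[OF h(1)])
    fix k assume k: "k < n"
    have Tk: "T (tm a k) = tm_comb a n (\<lambda>j. M j k)"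
      using T[of "\<lambda>i. if i = k then 1 else 0"] tm_comb_indicator[OF k, of a] k
      by (simp add: if_distrib cong: if_cong)
    have "ip (tm a k) (adjoint_on ?S T f) = ip (T (tm a k)) f" using h(2) tm_K2[OF k] by simp
    also have "\<dots> = (\<Sum>j<n. M j k * cnj (d j))" unfolding Tk f by (rule ip_tm_comb_tm_comb)
    finally have "ip (tm a k) (adjoint_on ?S T f) = (\<Sum>j<n. M j k * cnj (d j))" .
    thus "ip (adjoint_on ?S T f) (tm a k) = (\<Sum>j<n. cnj (M j k) * d j)"
      by (subst ip_cnj) simp
  qed
qed


lemma conj_z_nkernel: "conj_z (nkernel a) = (\<lambda>m. complex_of_real (sqrt (1 - (cmod a)\<^sup>2)) * pole_seq a m)"
  unfolding conj_z_def nkernel_def pole_seq_def by simp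

lemma conjC_tm: assumes "k < n" shows "conjC (bpow_seq a n) (tm a k) = tm a (n - Suc k)"
proof -
  define d where "d = n - Suc k"
  have n: "n = d + Suc k" unfolding d_def using assms by simp
  have l1R: "l1 (conj_z (nkernel a))" by (intro l1_conj_z l1_nkernel a1)
  have "conjC (bpow_seq a n) (tm a k) = mult (bpow_seq a n) (mult (cnj_seq (bpow_seq a k)) (conj_z (nkernel a)))"
    unfolding conjC_conj_z tm_def conj_z_mult ..
  also have "\<dots> = mult (mult (bpow_seq a n) (cnj_seq (bpow_seq a k))) (conj_z (nkernel a))"
    by (rule mult_assoc[symmetric]) (use a1 l1_bpow_seq l1_cnj_seq l1R l1_bounded_seq in auto)
  also have "mult (bpow_seq a n) (cnj_seq (bpow_seq a k)) = mult (bpow_seq a d) (blaschke_seq a)"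
  proof -
    have "bpow_seq a n = mult (mult (bpow_seq a d) (blaschke_seq a)) (bpow_seq a k)"
      unfolding n bpow_seq_add[OF a1]
      by (simp, rule mult_assoc[symmetric]) (use a1 l1_bpow_seq l1_blaschke_seq l1_bounded_seq in auto)
    hence "mult (bpow_seq a n) (cnj_seq (bpow_seq a k)) = mult (mult (mult (bpow_seq a d) (blaschke_seq a)) (bpow_seq a k)) (cnj_seq (bpow_seq a k))"
      by simp
    also have "\<dots> = mult (mult (bpow_seq a d) (blaschke_seq a)) (mult (bpow_seq a k) (cnj_seq (bpow_seq a k)))"
      by (rule mult_assoc) (use a1 l1_bpow_seq l1_blaschke_seq l1_cnj_seq l1_bounded_seq l1_mult in auto)
    also have "mult (bpow_seq a k) (cnj_seq (bpow_seq a k)) = one_seq" using cnj_bpow_seq_mult_self[OF a1, of k] by (simp add: mult_comm)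
    finally show ?thesis by (simp add: mult_one_right)
  qed
  also have "mult (mult (bpow_seq a d) (blaschke_seq a)) (conj_z (nkernel a)) = mult (bpow_seq a d) (mult (blaschke_seq a) (conj_z (nkernel a)))"
    by (rule mult_assoc) (use a1 l1_bpow_seq l1_blaschke_seq l1R l1_bounded_seq in auto)
  also have "mult (blaschke_seq a) (conj_z (nkernel a)) = nkernel a"
    by (simp only: conj_z_nkernel mult_scale_right blaschke_seq_pole_seq[OF a1]) (simp add: nkernel_def)
  finally show ?thesis unfolding tm_def d_def .
qed

lemma conjC_tm_comb: "conjC (bpow_seq a n) (tm_comb a n c) = tm_comb a n (\<lambda>k. cnj (c (n - Suc k)))"
proof -
  have R: "conj_z (tm_comb a n c) = (\<lambda>m. \<Sum>k<n. cnj (c k) * conj_z (tm a k) m)"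
    unfolding conj_z_def tm_comb_def by simp
  have "conjC (bpow_seq a n) (tm_comb a n c) = (\<lambda>m. \<Sum>k<n. cnj (c k) * mult (bpow_seq a n) (conj_z (tm a k)) m)"
    unfolding conjC_conj_z R
    by (intro mult_sum_right l1_L2 l1_bpow_seq a1 l1_conj_z l1_tm) auto
  also have "\<dots> = (\<lambda>m. \<Sum>k<n. cnj (c k) * tm a (n - Suc k) m)"
    using conjC_tm by (simp add: conjC_conj_z)
  also have "\<dots> = tm_comb a n (\<lambda>k. cnj (c (n - Suc k)))"
  proof
    fix m
    have "(\<Sum>k<n. cnj (c k) * tm a (n - Suc k) m) =
          (\<Sum>k<n. cnj (c (n - Suc (n - Suc k))) * tm a (n - Suc k) m)"
      by (intro sum.cong) auto
    also have "\<dots> = (\<Sum>k<n. cnj (c (n - Suc k)) * tm a k m)"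
      by (rule sum.nat_diff_reindex[where g="\<lambda>k. cnj (c (n - Suc k)) * tm a k m"])
    finally show "(\<Sum>k<n. cnj (c k) * tm a (n - Suc k) m) = tm_comb a n (\<lambda>k. cnj (c (n - Suc k))) m"
      unfolding tm_comb_def .
  qed
  finally show ?thesis .
qed

text \<open>The conjugation reverses the Takenaka--Malmquist coordinates, so \<open>C T C = T\<^sup>*\<close> says that the
  matrix of \<open>T\<close> is symmetric about its antidiagonal.\<close>
lemma conjC_matrix_conjC:
  assumes T: "\<And>c. T (tm_comb a n c) = tm_comb a n (\<lambda>j. \<Sum>k<n. M j k * c k)"
  shows "conjC (bpow_seq a n) (T (conjC (bpow_seq a n) (tm_comb a n d))) =
         tm_comb a n (\<lambda>i. \<Sum>k<n. cnj (M (n - Suc i) (n - Suc k)) * d k)"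
proof -
  have "conjC (bpow_seq a n) (T (conjC (bpow_seq a n) (tm_comb a n d))) =
        tm_comb a n (\<lambda>i. cnj (\<Sum>k<n. M (n - Suc i) k * cnj (d (n - Suc k))))"
    by (simp only: conjC_tm_comb T)
  also have "\<dots> = tm_comb a n (\<lambda>i. \<Sum>k<n. cnj (M (n - Suc i) (n - Suc k)) * d k)"
  proof (rule tm_comb_cong)
    fix i
    have "cnj (\<Sum>k<n. M (n - Suc i) k * cnj (d (n - Suc k))) =
          (\<Sum>k<n. cnj (M (n - Suc i) k) * d (n - Suc k))" by simp
    also have "\<dots> = (\<Sum>k<n. cnj (M (n - Suc i) (n - Suc (n - Suc k))) * d (n - Suc k))"
      by (intro sum.cong) auto
    also have "\<dots> = (\<Sum>k<n. cnj (M (n - Suc i) (n - Suc k)) * d k)"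
      by (rule sum.nat_diff_reindex[where g="\<lambda>k. cnj (M (n - Suc i) (n - Suc k)) * d k"])
    finally show "cnj (\<Sum>k<n. M (n - Suc i) k * cnj (d (n - Suc k))) =
                  (\<Sum>k<n. cnj (M (n - Suc i) (n - Suc k)) * d k)" .
  qed
  finally show ?thesis .
qed

lemma conjC_symmetric_iff_matrix:
  assumes T: "\<And>c. T (tm_comb a n c) = tm_comb a n (\<lambda>j. \<Sum>k<n. M j k * c k)"
  shows "(\<forall>f\<in>K2 (bpow_seq a n).
            conjC (bpow_seq a n) (T (conjC (bpow_seq a n) f)) = adjoint_on (K2 (bpow_seq a n)) T f)
         \<longleftrightarrow> (\<forall>i<n. \<forall>k<n. M (n - Suc i) (n - Suc k) = M k i)"
proof -
  have "(\<forall>f\<in>K2 (bpow_seq a n).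
            conjC (bpow_seq a n) (T (conjC (bpow_seq a n) f)) = adjoint_on (K2 (bpow_seq a n)) T f)
        \<longleftrightarrow> (\<forall>d. tm_comb a n (\<lambda>i. \<Sum>k<n. cnj (M (n - Suc i) (n - Suc k)) * d k) =
                  tm_comb a n (\<lambda>i. \<Sum>k<n. cnj (M k i) * d k))"
  proof
    assume h: "\<forall>f\<in>K2 (bpow_seq a n).
              conjC (bpow_seq a n) (T (conjC (bpow_seq a n) f)) = adjoint_on (K2 (bpow_seq a n)) T f"
    show "\<forall>d. tm_comb a n (\<lambda>i. \<Sum>k<n. cnj (M (n - Suc i) (n - Suc k)) * d k) =
              tm_comb a n (\<lambda>i. \<Sum>k<n. cnj (M k i) * d k)"
    proof
      fix d
      have "tm_comb a n d \<in> K2 (bpow_seq a n)" by (rule tm_comb_K2) simp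
      from h[rule_format, OF this]
      show "tm_comb a n (\<lambda>i. \<Sum>k<n. cnj (M (n - Suc i) (n - Suc k)) * d k) =
            tm_comb a n (\<lambda>i. \<Sum>k<n. cnj (M k i) * d k)"
        by (simp only: conjC_matrix_conjC[OF T] adjoint_on_K2_tm[OF T refl])
    qed
  qed (use K2_iff_tm_comb in \<open>auto simp: conjC_matrix_conjC[OF T] adjoint_on_K2_tm[OF T refl]\<close>)
  also have "\<dots> \<longleftrightarrow> (\<forall>i<n. \<forall>k<n. cnj (M (n - Suc i) (n - Suc k)) = cnj (M k i))"
    by (simp only: tm_comb_eq_iff sum_lessThan_mult_eq_all_iff)
  finally show ?thesis by simp
qed

lemma ip_mult_tm_Suc:
  assumes "\<phi> \<in> L2"
  shows "ip (mult \<phi> (tm a (Suc k))) (tm a (Suc j)) = ip (mult \<phi> (tm a k)) (tm a j)"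
proof -
  have mL: "mult \<phi> (tm a k) \<in> L2" using L2_mult_l1[OF l1_tm assms] by (simp add: mult_comm)
  have "mult \<phi> (tm a (Suc k)) = mult (mult (blaschke_seq a) (tm a k)) \<phi>"
    by (simp add: tm_Suc mult_comm)
  also have "\<dots> = mult (blaschke_seq a) (mult \<phi> (tm a k))"
    by (subst mult_assoc) (use a1 l1_blaschke_seq l1_tm assms L2_bounded_seq in \<open>auto simp: mult_comm\<close>)
  finally have "ip (mult \<phi> (tm a (Suc k))) (tm a (Suc j)) =
                ip (mult (blaschke_seq a) (mult \<phi> (tm a k))) (mult (blaschke_seq a) (tm a j))"
    by (simp add: tm_Suc)
  also have "\<dots> = ip (mult \<phi> (tm a k)) (tm a j)" by (rule ip_blaschke_seq_mult[OF a1 mL L2_tm])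
  finally show ?thesis .
qed

end

text \<open>Coefficients of \<open>b\<^sub>a\<^sup>d\<close> for \<open>d \<in> \<int>\<close>; on the circle \<open>b\<^sub>a\<^sup>-\<^sup>d = conj (b\<^sub>a\<^sup>d)\<close>.\<close>
definition bzpow_seq :: "complex \<Rightarrow> int \<Rightarrow> seq" where
  "bzpow_seq a d = (if 0 \<le> d then bpow_seq a (nat d) else cnj_seq (bpow_seq a (nat (- d))))"

definition toeplitz_symbol :: "complex \<Rightarrow> nat \<Rightarrow> (int \<Rightarrow> complex) \<Rightarrow> seq" where
  "toeplitz_symbol a N t = (\<lambda>m. \<Sum>d\<in>{1 - int N..int N - 1}. t d * bzpow_seq a d m)"

context
  fixes a :: complex
  assumes a1: "cmod a < 1"
begin

lemma l1_bzpow_seq: "l1 (bzpow_seq a d)"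
  unfolding bzpow_seq_def by (simp add: l1_bpow_seq[OF a1] l1_cnj_seq)

lemma l1_toeplitz_symbol: "l1 (toeplitz_symbol a N t)"
  unfolding toeplitz_symbol_def by (intro l1_sum l1_bzpow_seq finite_atLeastAtMost_int)

text \<open>Multiplication by \<open>b\<^sub>a\<^sup>d\<close> shifts the basis by \<open>d\<close>: for \<open>d < 0\<close> use the adjoint,
  \<open>\<langle>conj (b\<^sub>a\<^sup>-\<^sup>d) e\<^sub>k, e\<^sub>j\<rangle> = \<langle>e\<^sub>k, b\<^sub>a\<^sup>-\<^sup>d e\<^sub>j\<rangle>\<close>.\<close>
lemma ip_mult_bzpow_seq_tm:
  "ip (mult (bzpow_seq a d) (tm a k)) (tm a j) = (if d = int j - int k then 1 else 0)"
proof (cases "0 \<le> d")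
  case True
  hence "mult (bzpow_seq a d) (tm a k) = tm a (nat d + k)" by (simp add: bzpow_seq_def tm_add[OF a1])
  thus ?thesis using True by (auto simp: ip_tm_tm[OF a1])
next
  case False
  have "ip (mult (bzpow_seq a d) (tm a k)) (tm a j) = ip (tm a k) (tm a (nat (- d) + j))"
    using False ip_mult_left[OF l1_cnj_seq[OF l1_bpow_seq[OF a1]] L2_tm[OF a1] L2_tm[OF a1]]
    by (simp add: bzpow_seq_def cnj_seq_cnj_seq tm_add[OF a1])
  thus ?thesis using False by (auto simp: ip_tm_tm[OF a1])
qed

lemma ip_mult_toeplitz_symbol_tm:
  assumes "j < N" "k < N"
  shows "ip (mult (toeplitz_symbol a N t) (tm a k)) (tm a j) = t (int j - int k)"
proof -
  let ?D = "{1 - int N..int N - 1}"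
  have "mult (toeplitz_symbol a N t) (tm a k) = (\<lambda>m. \<Sum>d\<in>?D. t d * mult (tm a k) (bzpow_seq a d) m)"
    unfolding toeplitz_symbol_def mult_comm[of _ "tm a k"]
    by (rule mult_sum_right) (auto intro: L2_tm[OF a1] l1_L2 l1_bzpow_seq)
  hence "ip (mult (toeplitz_symbol a N t) (tm a k)) (tm a j) =
         (\<Sum>d\<in>?D. t d * ip (mult (bzpow_seq a d) (tm a k)) (tm a j))"
    by (simp add: mult_comm[of "tm a k"] ip_sum_left L2_mult_l1 l1_bzpow_seq L2_tm[OF a1])
  also have "\<dots> = (\<Sum>d\<in>?D. if d = int j - int k then t d else 0)"
    by (simp add: ip_mult_bzpow_seq_tm if_distrib cong: if_cong)
  also have "\<dots> = t (int j - int k)" using assms by simp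
  finally show ?thesis .
qed

end

section \<open>Toeplitz matrices\<close>

lemma toeplitz_shift:
  assumes T: "\<forall>j k. Suc j < N \<longrightarrow> Suc k < N \<longrightarrow> M (Suc j) (Suc k) = M j k"
  shows "j + t < N \<Longrightarrow> k + t < N \<Longrightarrow> M (j + t) (k + t) = M j k"
proof (induction t)
  case 0 thus ?case by simp
next
  case (Suc t)
  have "M (j + Suc t) (k + Suc t) = M (Suc (j + t)) (Suc (k + t))" by simp
  also have "\<dots> = M (j + t) (k + t)" using T Suc.prems by simp
  also have "\<dots> = M j k" using Suc by simp
  finally show ?case .
qed

lemma toeplitz_entry_eq:
  assumes T: "\<forall>j k. Suc j < N \<longrightarrow> Suc k < N \<longrightarrow> M (Suc j) (Suc k) = M j k"
    and "j < N" "k < N"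
  shows "M j k = (if 0 \<le> int j - int k then M (nat (int j - int k)) 0 else M 0 (nat (int k - int j)))"
proof (cases "k \<le> j")
  case True
  have "M ((j - k) + k) (0 + k) = M (j - k) 0" by (rule toeplitz_shift[OF T]) (use assms True in auto)
  thus ?thesis using True by (simp add: of_nat_diff nat_diff_distrib)
next
  case False
  have "M (0 + j) ((k - j) + j) = M 0 (k - j)" by (rule toeplitz_shift[OF T]) (use assms False in auto)
  thus ?thesis using False by (simp add: nat_diff_distrib)
qed

text \<open>Composing the antidiagonal symmetries of the blocks of sizes \<open>N\<close> and \<open>N - 1\<close> gives
  invariance under the diagonal shift.\<close>
lemma persymmetric_blocks_iff_toeplitz:
  shows "(\<forall>n\<in>{1..N}. \<forall>i<n. \<forall>k<n. M (n - Suc i) (n - Suc k) = M k i) \<longleftrightarrow>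
         (\<forall>j k. Suc j < N \<longrightarrow> Suc k < N \<longrightarrow> M (Suc j) (Suc k) = M j k)"
proof
  assume P: "\<forall>n\<in>{1..N}. \<forall>i<n. \<forall>k<n. M (n - Suc i) (n - Suc k) = M k i"
  show "\<forall>j k. Suc j < N \<longrightarrow> Suc k < N \<longrightarrow> M (Suc j) (Suc k) = M j k"
  proof (intro allI impI)
    fix j k assume j: "Suc j < N" and k: "Suc k < N"
    define n where "n = N - 1"
    have N: "N = Suc n" and jn: "j < n" and kn: "k < n" using j k unfolding n_def by auto
    have "M (N - Suc (n - Suc j)) (N - Suc (n - Suc k)) = M (n - Suc k) (n - Suc j)"
      using P[rule_format, of N "n - Suc j" "n - Suc k"] N jn kn by auto
    moreover have "N - Suc (n - Suc j) = Suc j" "N - Suc (n - Suc k) = Suc k" using N jn kn by auto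
    moreover have "M (n - Suc (n - Suc j)) (n - Suc (n - Suc k)) = M (n - Suc k) (n - Suc j)"
      using P[rule_format, of n "n - Suc j" "n - Suc k"] N jn kn by auto
    moreover have "n - Suc (n - Suc j) = j" "n - Suc (n - Suc k) = k" using jn kn by auto
    ultimately show "M (Suc j) (Suc k) = M j k" by simp
  qed
next
  assume T: "\<forall>j k. Suc j < N \<longrightarrow> Suc k < N \<longrightarrow> M (Suc j) (Suc k) = M j k"
  show "\<forall>n\<in>{1..N}. \<forall>i<n. \<forall>k<n. M (n - Suc i) (n - Suc k) = M k i"
  proof (intro ballI allI impI)
    fix n i k assume n: "n \<in> {1..N}" and i: "i < n" and k: "k < n"
    show "M (n - Suc i) (n - Suc k) = M k i"
    proof (cases "i + k < n")
      case True
      define t where "t = n - Suc i - k"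
      have "k + t = n - Suc i" "i + t = n - Suc k" using True unfolding t_def by auto
      moreover have "M (k + t) (i + t) = M k i"
        by (rule toeplitz_shift[OF T]) (use True n i k in \<open>auto simp: t_def\<close>)
      ultimately show ?thesis by simp
    next
      case False
      define t where "t = i + k - (n - 1)"
      have "(n - Suc i) + t = k" "(n - Suc k) + t = i" using False i k unfolding t_def by auto
      moreover have "M ((n - Suc i) + t) ((n - Suc k) + t) = M (n - Suc i) (n - Suc k)"
        by (rule toeplitz_shift[OF T]) (use False n i k in \<open>auto simp: t_def\<close>)
      ultimately show ?thesis by simp
    qed
  qed
qed

section \<open>Operators on the model space and their matrices\<close>

locale K2_operator =
  fixes a :: complex and N :: nat and A :: "seq \<Rightarrow> seq"
  assumes a1: "cmod a < 1"
    and linear: "linear_operator_on (K2 (bpow_seq a N)) A"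
begin

definition tm_entry :: "nat \<Rightarrow> nat \<Rightarrow> complex" where "tm_entry j k = ip (A (tm a k)) (tm a j)"

lemma A_K2: "f \<in> K2 (bpow_seq a N) \<Longrightarrow> A f \<in> K2 (bpow_seq a N)"
  using linear unfolding linear_operator_on_def by auto

lemma A_lincomb: "f \<in> K2 (bpow_seq a N) \<Longrightarrow> g \<in> K2 (bpow_seq a N) \<Longrightarrow>
    A (\<lambda>n. c * f n + g n) = (\<lambda>n. c * A f n + A g n)"
  using linear unfolding linear_operator_on_def by auto

lemma A_zero: "A (\<lambda>m. 0) = (\<lambda>m. 0)"
proof -
  have "(\<lambda>m. 0) \<in> K2 (bpow_seq a N)"
    using tm_comb_K2[OF a1, of N N "\<lambda>k. 0"] by (simp add: tm_comb_zero)
  thus ?thesis using A_lincomb[of "\<lambda>m. 0" "\<lambda>m. 0" "-1"] by simp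
qed

lemma A_tm_comb: "n \<le> N \<Longrightarrow> A (tm_comb a n c) = tm_comb a N (\<lambda>j. \<Sum>k<n. tm_entry j k * c k)"
proof (induction n)
  case 0 thus ?case by (simp add: tm_comb_0 A_zero tm_comb_zero)
next
  case (Suc n)
  have "A (tm_comb a (Suc n) c) = (\<lambda>m. c n * A (tm a n) m + A (tm_comb a n c) m)"
    unfolding tm_comb_Suc
    by (rule A_lincomb) (use Suc.prems tm_K2[OF a1] tm_comb_K2[OF a1] in auto)
  also have "A (tm a n) = tm_comb a N (\<lambda>j. tm_entry j n)"
    unfolding tm_entry_def using Suc.prems by (intro K2_tm_expansion[OF a1] A_K2 tm_K2[OF a1]) simp
  also have "(\<lambda>m. c n * tm_comb a N (\<lambda>j. tm_entry j n) m + A (tm_comb a n c) m) =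
             tm_comb a N (\<lambda>j. c n * tm_entry j n + (\<Sum>k<n. tm_entry j k * c k))"
    using Suc by (simp add: tm_comb_lincomb)
  finally show ?case by (simp add: mult.commute add.commute)
qed

text \<open>The compression \<open>A\<^sub>n = P\<^sub>n A|\<^sub>K\<^sub>2\<^sub>(\<^sub>b\<^sub>a\<^sup>n\<^sub>)\<close> has the upper left \<open>n \<times> n\<close> block of the
  matrix of \<open>A\<close>, the bases of the model spaces being nested.\<close>
lemma compression_tm_comb:
  assumes "n \<le> N"
  shows "proj (K2 (bpow_seq a n)) (A (tm_comb a n c)) = tm_comb a n (\<lambda>j. \<Sum>k<n. tm_entry j k * c k)"
proof -
  have "A (tm_comb a n c) \<in> L2" by (rule L2_if_K2[OF A_K2[OF tm_comb_K2[OF a1 assms]]])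
  hence "proj (K2 (bpow_seq a n)) (A (tm_comb a n c)) =
         tm_comb a n (\<lambda>j. ip (A (tm_comb a n c)) (tm a j))"
    by (rule proj_K2_tm[OF a1])
  also have "\<dots> = tm_comb a n (\<lambda>j. \<Sum>k<n. tm_entry j k * c k)"
    by (rule tm_comb_cong) (use assms in \<open>simp add: A_tm_comb ip_tm_comb_tm[OF a1]\<close>)
  finally show ?thesis .
qed

lemma compression_conjC_symmetric_iff:
  assumes "n \<le> N"
  shows "(\<forall>f\<in>K2 (bpow_seq a n).
            conjC (bpow_seq a n) ((\<lambda>g. proj (K2 (bpow_seq a n)) (A g)) (conjC (bpow_seq a n) f))
            = adjoint_on (K2 (bpow_seq a n)) (\<lambda>g. proj (K2 (bpow_seq a n)) (A g)) f)
         \<longleftrightarrow> (\<forall>i<n. \<forall>k<n. tm_entry (n - Suc i) (n - Suc k) = tm_entry k i)"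
  using conjC_symmetric_iff_matrix[OF a1 compression_tm_comb[OF assms]] by simp

lemma TTO_imp_toeplitz:
  assumes "TTO (bpow_seq a N) A"
  shows "\<forall>j k. Suc j < N \<longrightarrow> Suc k < N \<longrightarrow> tm_entry (Suc j) (Suc k) = tm_entry j k"
proof -
  obtain \<phi> where \<phi>: "\<phi> \<in> L2"
    and A_eq: "\<forall>f\<in>K2 (bpow_seq a N). mult \<phi> f \<in> L2 \<longrightarrow> A f = proj (K2 (bpow_seq a N)) (mult \<phi> f)"
    using assms unfolding TTO_def by blast
  have entry: "tm_entry j k = ip (mult \<phi> (tm a k)) (tm a j)" if "j < N" "k < N" for j k
  proof -
    have mL: "mult \<phi> (tm a k) \<in> L2" using L2_mult_l1[OF l1_tm[OF a1] \<phi>] by (simp add: mult_comm)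
    hence "A (tm a k) = tm_comb a N (\<lambda>i. ip (mult \<phi> (tm a k)) (tm a i))"
      using A_eq tm_K2[OF a1 that(2)] proj_K2_tm[OF a1 mL] by simp
    thus ?thesis unfolding tm_entry_def using that by (simp add: ip_tm_comb_tm[OF a1])
  qed
  show ?thesis using entry ip_mult_tm_Suc[OF a1 \<phi>] by simp
qed

lemma A_eq_proj_mult_if_entries:
  assumes "l1 \<phi>" and entries: "\<And>j k. j < N \<Longrightarrow> k < N \<Longrightarrow> tm_entry j k = ip (mult \<phi> (tm a k)) (tm a j)"
    and f: "f \<in> K2 (bpow_seq a N)"
  shows "A f = proj (K2 (bpow_seq a N)) (mult \<phi> f)"
proof -
  obtain c where c: "f = tm_comb a N c" using f K2_iff_tm_comb[OF a1] by blast
  have "proj (K2 (bpow_seq a N)) (mult \<phi> f) = tm_comb a N (\<lambda>j. ip (mult \<phi> f) (tm a j))"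
    by (rule proj_K2_tm[OF a1 L2_mult_l1[OF assms(1) L2_if_K2[OF f]]])
  also have "\<dots> = tm_comb a N (\<lambda>j. \<Sum>k<N. tm_entry j k * c k)"
  proof (rule tm_comb_cong)
    fix j assume j: "j < N"
    have mL: "mult \<phi> (tm a k) \<in> L2" for k by (intro L2_mult_l1 assms(1) L2_tm[OF a1])
    have "mult \<phi> f = (\<lambda>m. \<Sum>k<N. c k * mult \<phi> (tm a k) m)"
      unfolding c tm_comb_def by (rule mult_sum_right) (use assms(1) l1_L2 L2_tm[OF a1] in auto)
    hence "ip (mult \<phi> f) (tm a j) = (\<Sum>k<N. c k * ip (mult \<phi> (tm a k)) (tm a j))"
      by (simp add: ip_sum_left mL L2_tm[OF a1])
    also have "\<dots> = (\<Sum>k<N. tm_entry j k * c k)" by (intro sum.cong) (simp_all add: entries j mult.commute)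
    finally show "ip (mult \<phi> f) (tm a j) = (\<Sum>k<N. tm_entry j k * c k)" .
  qed
  also have "\<dots> = A f" unfolding c by (rule A_tm_comb[symmetric]) simp
  finally show ?thesis ..
qed

lemma A_bounded: "\<exists>B. \<forall>f\<in>K2 (bpow_seq a N). l2norm (A f) \<le> B * l2norm f"
proof (intro exI ballI)
  define K where "K = (\<Sum>j<N. (\<Sum>k<N. cmod (tm_entry j k))\<^sup>2)"
  fix f assume f: "f \<in> K2 (bpow_seq a N)"
  obtain c where c: "f = tm_comb a N c" using f K2_iff_tm_comb[OF a1] by blast
  define s2 where "s2 = (\<Sum>k<N. (cmod (c k))\<^sup>2)"
  have s20: "s2 \<ge> 0" unfolding s2_def by (intro sum_nonneg) auto
  have ck: "cmod (c k) \<le> sqrt s2" if "k < N" for k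
  proof -
    have "(cmod (c k))\<^sup>2 \<le> s2" unfolding s2_def
      by (rule member_le_sum[where f="\<lambda>k. (cmod (c k))\<^sup>2"]) (use that in auto)
    thus ?thesis by (simp add: real_le_rsqrt)
  qed
  have row: "(cmod (\<Sum>k<N. tm_entry j k * c k))\<^sup>2 \<le> (\<Sum>k<N. cmod (tm_entry j k))\<^sup>2 * s2" for j
  proof -
    have "cmod (\<Sum>k<N. tm_entry j k * c k) \<le> (\<Sum>k<N. cmod (tm_entry j k) * cmod (c k))"
      by (rule order_trans[OF norm_sum]) (simp add: norm_mult)
    also have "\<dots> \<le> (\<Sum>k<N. cmod (tm_entry j k)) * sqrt s2"
      unfolding sum_distrib_right by (intro sum_mono mult_left_mono ck) auto
    finally have "(cmod (\<Sum>k<N. tm_entry j k * c k))\<^sup>2 \<le> ((\<Sum>k<N. cmod (tm_entry j k)) * sqrt s2)\<^sup>2"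
      by (intro power_mono) auto
    thus ?thesis using s20 by (simp add: power_mult_distrib)
  qed
  have "l2norm (A f) = sqrt (\<Sum>j<N. (cmod (\<Sum>k<N. tm_entry j k * c k))\<^sup>2)"
    unfolding l2norm_def c A_tm_comb[OF order_refl]
    using l2norm_sq_tm_comb[OF a1] unfolding l2norm_sq_def by simp
  also have "\<dots> \<le> sqrt (K * s2)"
    unfolding K_def sum_distrib_right by (intro real_sqrt_le_mono sum_mono row)
  also have "\<dots> = sqrt K * l2norm f"
    using l2norm_sq_tm_comb[OF a1, of N c]
    unfolding l2norm_def c s2_def l2norm_sq_def by (simp add: real_sqrt_mult)
  finally show "l2norm (A f) \<le> sqrt K * l2norm f" .
qed

lemma toeplitz_imp_TTO:
  assumes T: "\<forall>j k. Suc j < N \<longrightarrow> Suc k < N \<longrightarrow> tm_entry (Suc j) (Suc k) = tm_entry j k"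
  shows "TTO (bpow_seq a N) A"
proof -
  define t where "t d = (if 0 \<le> d then tm_entry (nat d) 0 else tm_entry 0 (nat (- d)))" for d :: int
  define \<phi> where "\<phi> = toeplitz_symbol a N t"
  have l1\<phi>: "l1 \<phi>" unfolding \<phi>_def by (rule l1_toeplitz_symbol[OF a1])
  have entries: "tm_entry j k = ip (mult \<phi> (tm a k)) (tm a j)" if "j < N" "k < N" for j k
    unfolding \<phi>_def ip_mult_toeplitz_symbol_tm[OF a1 that] t_def
    using toeplitz_entry_eq[OF T that] by simp
  have "\<forall>f\<in>K2 (bpow_seq a N). mult \<phi> f \<in> L2 \<longrightarrow> A f = proj (K2 (bpow_seq a N)) (mult \<phi> f)"
    using A_eq_proj_mult_if_entries[OF l1\<phi> entries] by blast
  moreover have "\<forall>f\<in>K2 (bpow_seq a N). \<forall>\<epsilon>>0. \<exists>g\<in>K2 (bpow_seq a N).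
                   mult \<phi> g \<in> L2 \<and> l2norm (\<lambda>n. f n - g n) < \<epsilon>"
    using L2_mult_l1[OF l1\<phi> L2_if_K2] by (fastforce simp: l2norm_def)
  ultimately show ?thesis unfolding TTO_def using l1_L2[OF l1\<phi>] A_bounded by blast
qed

lemma TTO_iff_toeplitz:
  "TTO (bpow_seq a N) A \<longleftrightarrow> (\<forall>j k. Suc j < N \<longrightarrow> Suc k < N \<longrightarrow> tm_entry (Suc j) (Suc k) = tm_entry j k)"
  using TTO_imp_toeplitz toeplitz_imp_TTO by blast

end

theorem proposition3p2:
  fixes a :: complex and N :: nat and A :: "seq \<Rightarrow> seq"
  assumes "cmod a < 1"
    and "linear_operator_on (K2 (bpow a N)) A"
  shows "TTO (bpow a N) A \<longleftrightarrow>
    (\<forall>n \<in> {1..N}.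
       \<forall>f \<in> K2 (bpow a n).
         conjC (bpow a n) ((\<lambda>g. proj (K2 (bpow a n)) (A g)) (conjC (bpow a n) f))
         = adjoint_on (K2 (bpow a n)) (\<lambda>g. proj (K2 (bpow a n)) (A g)) f)"
proof -
  have bpow: "\<And>n. bpow a n = bpow_seq a n" by (rule bpow_eq_bpow_seq[OF assms(1)])
  interpret K2_operator a N A
    by unfold_locales (use assms bpow in auto)
  have "TTO (bpow a N) A \<longleftrightarrow>
        (\<forall>j k. Suc j < N \<longrightarrow> Suc k < N \<longrightarrow> tm_entry (Suc j) (Suc k) = tm_entry j k)"
    unfolding bpow by (rule TTO_iff_toeplitz)
  also have "\<dots> \<longleftrightarrow> (\<forall>n\<in>{1..N}. \<forall>i<n. \<forall>k<n. tm_entry (n - Suc i) (n - Suc k) = tm_entry k i)"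
    by (rule persymmetric_blocks_iff_toeplitz[symmetric])
  also have "\<dots> \<longleftrightarrow> (\<forall>n \<in> {1..N}. \<forall>f \<in> K2 (bpow a n).
         conjC (bpow a n) ((\<lambda>g. proj (K2 (bpow a n)) (A g)) (conjC (bpow a n) f))
         = adjoint_on (K2 (bpow a n)) (\<lambda>g. proj (K2 (bpow a n)) (A g)) f)"
    unfolding bpow using compression_conjC_symmetric_iff by auto
  finally show ?thesis .
qed

end
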